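(* Let $g:[0,1]\to\mathbb{R}$ be non-constant, bounded, Riemann integrable and piecewise continuous, with $g(0)=0$. Here piecewise continuity means that $[0,1]$ can be partitioned into finitely many intervals of positive length on each of which $g$ is continuous. Let $h:[-1,1]\to\mathbb{R}$ be non-constant with $h(x)=0$ for $x\le0$, of bounded total variation, and $\alpha$-Hölder continuous on $[0,1]$ for some $\alpha>0$. Assume moreover that $\inf\{x:h(x)\ne0\}=0$. Then $$\sup_{0\le t\le1}\Big|\int_0^1h(x-t)g(x)\,dx-\int_0^1g(x)\,dx\int_0^1h(x-t)\,dx\Big|>0.$$ *)

theory Defs
  imports "HOL-Analysis.Analysis" "HOL-Library.Disjoint_Sets"
begin

definition riemann_integrable_on :: "(real \<Rightarrow> real) \<Rightarrow> real \<Rightarrow> real \<Rightarrow> bool" where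
  "riemann_integrable_on f a b \<longleftrightarrow>
     (\<exists>I. \<forall>e>0. \<exists>\<delta>>0. \<forall>p. p tagged_division_of {a..b} \<and> (\<lambda>x. ball x \<delta>) fine p \<longrightarrow>
        \<bar>(\<Sum>(x,K)\<in>p. Henstock_Kurzweil_Integration.content K * f x) - I\<bar> < e)"

definition piecewise_continuous_on :: "(real \<Rightarrow> real) \<Rightarrow> real \<Rightarrow> real \<Rightarrow> bool" where
  "piecewise_continuous_on f a b \<longleftrightarrow>
     (\<exists>\<I>. finite \<I> \<and> disjoint \<I> \<and> \<Union>\<I> = {a..b} \<and>
        (\<forall>I\<in>\<I>. is_interval I \<and> (\<exists>x\<in>I. \<exists>y\<in>I. x < y) \<and> continuous_on I f))"

definition bounded_variation_on :: "(real \<Rightarrow> real) \<Rightarrow> real \<Rightarrow> real \<Rightarrow> bool" where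
  "bounded_variation_on f a b \<longleftrightarrow>
     (\<exists>M. \<forall>(n::nat) (x::nat \<Rightarrow> real). x 0 = a \<and> x n = b \<and> (\<forall>i<n. x i \<le> x (Suc i)) \<longrightarrow>
        (\<Sum>i<n. \<bar>f (x (Suc i)) - f (x i)\<bar>) \<le> M)"

definition holder_continuous_on :: "real \<Rightarrow> real set \<Rightarrow> (real \<Rightarrow> real) \<Rightarrow> bool" where
  "holder_continuous_on \<alpha> S f \<longleftrightarrow>
     (\<exists>C. \<forall>x\<in>S. \<forall>y\<in>S. \<bar>f x - f y\<bar> \<le> C * \<bar>x - y\<bar> powr \<alpha>)"

end

theory Submission
  imports Defs "HOL-Real_Asymp.Real_Asymp"
begin

(* Extend h to the continuous function phi x = h (max 0 (min x 1)), which vanishes on (-oo, 0],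
   and put k = g - int_0^1 g.  If the supremum were 0, every translate phi (. - t), 0 <= t <= 1,
   would be orthogonal to k on [0, 1].  Integrating by parts against a primitive of phi turns
   this into the vanishing on (-oo, 1] of the convolution of phi with the continuous function
   v |-> int_(1-v)^1 k.  As phi does not vanish identically near 0, Titchmarsh's convolution
   theorem gives int_x^1 k = 0 for all x in [0, 1]; so k vanishes at its points of continuity,
   and g is constant because it is piecewise continuous.

   Titchmarsh's theorem is proved along Mikusinski's lines.  For squares, conv p p = 0 on
   [0, 2c] bounds the exponential moments int e^(n v) p(c/2 - v) dv uniformly in n, which forces
   p = 0 on [0, c/2] and, by a supremum argument, on [0, c].  The identity
   t (f * g) = (t f) * g + f * (t g) reduces the general case to squares and shows that all
   weighted convolutions (t^j f) * (t^k g) vanish; hence all moments of s |-> f s g (t - s)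
   vanish, and Weierstrass approximation gives f s g (t - s) = 0. *)

section \<open>Convolution of causal functions\<close>

definition causal :: "(real \<Rightarrow> real) \<Rightarrow> bool" where
  "causal f \<longleftrightarrow> continuous_on UNIV f \<and> (\<forall>x\<le>0. f x = 0)"

definition conv :: "(real \<Rightarrow> real) \<Rightarrow> (real \<Rightarrow> real) \<Rightarrow> real \<Rightarrow> real" where
  "conv f g t = integral {0..t} (\<lambda>u. f u * g (t - u))"

lemma causal_zero: "causal f \<Longrightarrow> x \<le> 0 \<Longrightarrow> f x = 0"
  unfolding causal_def by blast

lemma causal_continuous_on: "causal f \<Longrightarrow> continuous_on S f"
  unfolding causal_def using continuous_on_subset by blast

lemma continuous_on_causal:
  "causal f \<Longrightarrow> continuous_on S g \<Longrightarrow> continuous_on S (\<lambda>x. f (g x))"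
  unfolding causal_def by (auto intro: continuous_on_compose2[of UNIV f])

lemma causal_mult_power: "causal f \<Longrightarrow> causal (\<lambda>x. x ^ j * f x)"
  unfolding causal_def by (auto intro!: continuous_intros)

lemma causal_shift:
  assumes "causal p" "\<And>x. x \<le> a \<Longrightarrow> p x = 0" "0 \<le> a"
  shows "causal (\<lambda>x. p (x + a))"
proof -
  have "continuous_on UNIV (\<lambda>x. p (x + a))"
    by (intro continuous_on_causal[OF assms(1)] continuous_intros)
  then show ?thesis using assms by (simp add: causal_def)
qed

lemma integrable_conv_integrand:
  assumes "causal f" "causal g"
  shows "(\<lambda>u. f u * g (t - u)) integrable_on {a..b}"
  by (intro integrable_continuous_real continuous_intros causal_continuous_on[OF assms(1)]
      continuous_on_causal[OF assms(2)])

lemma continuous_zero_below_imp_zero_le: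
  fixes p :: "real \<Rightarrow> real"
  assumes "continuous_on UNIV p" "\<And>x. x < a \<Longrightarrow> p x = 0" "x \<le> a"
  shows "p x = 0"
proof -
  have "closed {x. p x = 0}"
    using continuous_closed_preimage_constant[OF assms(1) closed_UNIV, of 0] by simp
  moreover have "{..<a} \<subseteq> {x. p x = 0}" using assms(2) by auto
  ultimately have "closure {..<a} \<subseteq> {x. p x = 0}" by (rule closure_minimal[rotated])
  then show ?thesis using assms(3) by auto
qed

lemma integral_zero_left:
  fixes \<psi> :: "real \<Rightarrow> real"
  assumes "c \<le> a" "a \<le> d" "\<psi> integrable_on {c..d}" "\<And>x. x \<in> {c..a} \<Longrightarrow> \<psi> x = 0"
  shows "integral {c..d} \<psi> = integral {a..d} \<psi>"
proof -
  have "integral {c..a} \<psi> = integral {c..a} (\<lambda>_. 0)"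
    by (rule integral_cong) (use assms in auto)
  then show ?thesis
    using Henstock_Kurzweil_Integration.integral_combine[where a=c and c=a and b=d and f=\<psi>] assms
    by simp
qed

lemma integral_zero_outside:
  fixes \<psi> :: "real \<Rightarrow> real"
  assumes "c \<le> a" "a \<le> b" "b \<le> d" "\<psi> integrable_on {c..d}"
    "\<And>x. x \<in> {c..a} \<Longrightarrow> \<psi> x = 0" "\<And>x. x \<in> {b..d} \<Longrightarrow> \<psi> x = 0"
  shows "integral {c..d} \<psi> = integral {a..b} \<psi>"
proof -
  have "\<psi> integrable_on {a..d}"
    by (rule integrable_subinterval_real[OF assms(4)]) (use assms in auto)
  moreover have "integral {b..d} \<psi> = integral {b..d} (\<lambda>_. 0)"
    by (rule integral_cong) (use assms in auto)
  ultimately show ?thesis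
    using integral_zero_left[of c a d \<psi>] assms
      Henstock_Kurzweil_Integration.integral_combine[where a=a and c=b and b=d and f=\<psi>]
    by simp
qed

lemma integral_shift_ivl:
  fixes F :: "real \<Rightarrow> real"
  shows "integral {a..b} F = integral {a - c..b - c} (\<lambda>x. F (x + c))"
  using integral_shift_real_ivl[of a c b F] by simp

lemma integral_reflect_ivl:
  fixes F :: "real \<Rightarrow> real"
  shows "integral {0..a} (\<lambda>v. F (a - v)) = integral {0..a} F"
proof -
  have "integral {0..a} (\<lambda>v. F (a - v)) = integral {-a..0} (\<lambda>x. F (-x))"
    using integral_shift_ivl[of "-a" 0 "\<lambda>x. F (-x)" "-a"] by simp
  then show ?thesis
    using Henstock_Kurzweil_Integration.integral_reflect_real[of a 0 F] by simp
qed

lemma conv_nonpos: "causal f \<Longrightarrow> t \<le> 0 \<Longrightarrow> conv f g t = 0"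
proof -
  assume "causal f" "t \<le> 0"
  then have "integral {0..t} (\<lambda>u. f u * g (t - u)) = integral {0..t} (\<lambda>_. 0)"
    by (intro integral_cong) (auto simp: causal_zero)
  then show ?thesis by (simp add: conv_def)
qed

lemma conv_eq_integral_upto:
  assumes "causal f" "causal g" "t \<le> T" "0 \<le> T"
  shows "conv f g t = integral {0..T} (\<lambda>u. f u * g (t - u))"
proof (cases "t < 0")
  case True
  have "integral {0..T} (\<lambda>u. f u * g (t - u)) = integral {0..T} (\<lambda>_. 0)"
    by (rule integral_cong) (use assms True causal_zero[of g] in auto)
  then show ?thesis using True by (simp add: conv_def)
next
  case False
  have "integral {0..T} (\<lambda>u. f u * g (t - u)) = integral {0..t} (\<lambda>u. f u * g (t - u))"
    by (rule integral_zero_outside[OF _ _ _ integrable_conv_integrand[OF assms(1,2)]])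
       (use assms False causal_zero[of g] causal_zero[of f] in auto)
  then show ?thesis by (simp add: conv_def)
qed

lemma causal_conv:
  assumes "causal f" "causal g"
  shows "causal (conv f g)"
proof -
  have "isCont (conv f g) x0" for x0
  proof -
    define T where "T = \<bar>x0\<bar> + 1"
    have "continuous_on (UNIV \<times> cbox 0 T) (\<lambda>(t, u). f u * g (t - u))"
      unfolding case_prod_beta'
      by (intro continuous_intros continuous_on_causal[OF assms(1)] continuous_on_causal[OF assms(2)])
    then have "continuous_on UNIV (\<lambda>t. integral (cbox 0 T) (\<lambda>u. f u * g (t - u)))"
      by (rule integral_continuous_on_param)
    then have "continuous_on {..<T} (\<lambda>t. integral {0..T} (\<lambda>u. f u * g (t - u)))"
      by (auto intro: continuous_on_subset)
    moreover have "integral {0..T} (\<lambda>u. f u * g (t - u)) = conv f g t" if "t \<in> {..<T}" for t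
      using conv_eq_integral_upto[OF assms, of t T] that by (simp add: T_def)
    ultimately have "continuous_on {..<T} (conv f g)"
      by (rule continuous_on_cong[THEN iffD1, OF refl, rotated])
    then show ?thesis
      using continuous_on_eq_continuous_at[of "{..<T}" "conv f g"] by (simp add: T_def)
  qed
  then show ?thesis
    using conv_nonpos[OF assms(1)] by (simp add: causal_def continuous_at_imp_continuous_on)
qed

lemma conv_commute:
  assumes "causal f" "causal g"
  shows "conv f g = conv g f"
proof
  fix t
  have "integral {0..t} (\<lambda>u. f u * g (t - u)) = integral {0..t} (\<lambda>v. g v * f (t - v))"
    using integral_reflect_ivl[of t "\<lambda>u. g u * f (t - u)"] by (simp add: mult.commute)
  then show "conv f g t = conv g f t" by (simp add: conv_def)
qed

lemma conv_assoc:
  assumes "causal f" "causal g" "causal h"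
  shows "conv (conv f g) h = conv f (conv g h)"
proof
  fix t
  show "conv (conv f g) h t = conv f (conv g h) t"
  proof (cases "t \<le> 0")
    case True
    then show ?thesis using conv_nonpos causal_conv assms by simp
  next
    case False
    have inner: "integral {0..t} (\<lambda>u. f v * g (u - v) * h (t - u)) = f v * conv g h (t - v)"
      if "v \<in> {0..t}" for v
    proof -
      have "(\<lambda>u. g (u - v) * h (t - u)) integrable_on {0..t}"
        by (intro integrable_continuous_real continuous_intros continuous_on_causal[OF assms(2)]
            continuous_on_causal[OF assms(3)])
      then have "integral {0..t} (\<lambda>u. g (u - v) * h (t - u)) = integral {v..t} (\<lambda>u. g (u - v) * h (t - u))"
        by (rule integral_zero_outside[rotated 3]) (use that assms in \<open>auto simp: causal_zero\<close>)
      also have "\<dots> = integral {0..t - v} (\<lambda>w. g w * h (t - v - w))"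
        using integral_shift_ivl[of v t "\<lambda>u. g (u - v) * h (t - u)" v] by (simp add: algebra_simps)
      finally show ?thesis by (simp add: conv_def mult.assoc)
    qed
    have "continuous_on (cbox (0,0) (t,t)) (\<lambda>(u,v). f v * g (u - v) * h (t - u))"
      unfolding case_prod_beta' using assms
      by (intro continuous_intros continuous_on_causal[OF assms(1)] continuous_on_causal[OF assms(2)]
          continuous_on_causal[OF assms(3)])
    then have swap: "integral {0..t} (\<lambda>u. integral {0..t} (\<lambda>v. f v * g (u - v) * h (t - u)))
        = integral {0..t} (\<lambda>v. integral {0..t} (\<lambda>u. f v * g (u - v) * h (t - u)))"
      using integral_swap_continuous by (fastforce simp: box_real)
    have "conv (conv f g) h t = integral {0..t} (\<lambda>u. integral {0..t} (\<lambda>v. f v * g (u - v)) * h (t - u))"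
      unfolding conv_def[of "conv f g"] by (rule integral_cong) (use assms in \<open>simp add: conv_eq_integral_upto\<close>)
    also have "\<dots> = integral {0..t} (\<lambda>v. integral {0..t} (\<lambda>u. f v * g (u - v) * h (t - u)))"
      using swap by simp
    also have "\<dots> = integral {0..t} (\<lambda>v. f v * conv g h (t - v))"
      by (rule integral_cong) (simp add: inner)
    finally show ?thesis by (simp add: conv_def[of f])
  qed
qed

lemma conv_exchange:
  assumes "causal a" "causal b" "causal c" "causal d"
  shows "conv (conv a b) (conv c d) = conv (conv a d) (conv c b)"
proof -
  have "conv b (conv c d) = conv (conv b c) d" using conv_assoc[of b c d] assms by simp
  also have "\<dots> = conv d (conv c b)"
    using conv_commute[of "conv b c" d] conv_commute[of b c] causal_conv[of b c] assms by simp
  finally have "conv b (conv c d) = conv d (conv c b)" .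
  then show ?thesis
    using conv_assoc[of a b "conv c d"] conv_assoc[of a d "conv c b"] causal_conv assms by simp
qed

lemma mult_conv:
  assumes "causal f" "causal g"
  shows "t * conv f g t = conv (\<lambda>x. x * f x) g t + conv f (\<lambda>x. x * g x) t"
proof -
  have "(\<lambda>u. u * f u * g (t - u)) integrable_on {0..t}"
    "(\<lambda>u. f u * ((t - u) * g (t - u))) integrable_on {0..t}"
    by (auto intro!: integrable_continuous_real continuous_intros causal_continuous_on[OF assms(1)]
        continuous_on_causal[OF assms(2)])
  then have "conv (\<lambda>x. x * f x) g t + conv f (\<lambda>x. x * g x) t
      = integral {0..t} (\<lambda>u. u * f u * g (t - u) + f u * ((t - u) * g (t - u)))"
    by (simp add: conv_def integral_add)
  also have "\<dots> = integral {0..t} (\<lambda>u. t * (f u * g (t - u)))"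
    by (rule integral_cong) (simp add: algebra_simps)
  finally show ?thesis by (simp add: conv_def)
qed

lemma conv_eq_0_if_vanishing:
  assumes "\<And>x. x \<le> a \<Longrightarrow> f x = 0" "\<And>x. x \<le> b \<Longrightarrow> g x = 0" "t \<le> a + b"
  shows "conv f g t = 0"
proof -
  have "integral {0..t} (\<lambda>u. f u * g (t - u)) = integral {0..t} (\<lambda>_. 0)"
  proof (rule integral_cong)
    fix u
    show "f u * g (t - u) = 0"
      using assms(1)[of u] assms(2)[of "t - u"] assms(3) by fastforce
  qed
  then show ?thesis by (simp add: conv_def)
qed

lemma conv_self_shift:
  assumes "causal p" "\<And>x. x \<le> a \<Longrightarrow> p x = 0" "0 \<le> a"
  shows "conv p p (t + 2*a) = conv (\<lambda>x. p (x + a)) (\<lambda>x. p (x + a)) t"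
proof (cases "t \<le> 0")
  case True
  have "conv p p (t + 2*a) = 0"
    by (rule conv_eq_0_if_vanishing[of a p a]) (use assms True in auto)
  then show ?thesis using conv_nonpos[OF causal_shift[OF assms] True] by simp
next
  case False
  define F where "F = (\<lambda>u. p u * p (t + 2*a - u))"
  have "F integrable_on {0..t+2*a}"
    unfolding F_def by (rule integrable_conv_integrand[OF assms(1,1)])
  then have "integral {0..t+2*a} F = integral {a..t+a} F"
    by (rule integral_zero_outside[rotated 3]) (use assms False in \<open>auto simp: F_def\<close>)
  then have "conv p p (t + 2*a) = integral {a..t+a} F"
    by (simp add: conv_def F_def)
  also have "\<dots> = conv (\<lambda>x. p (x + a)) (\<lambda>x. p (x + a)) t"
    using integral_shift_ivl[of a "t + a" F a] by (simp add: conv_def F_def algebra_simps)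
  finally show ?thesis .
qed

section \<open>Bounded exponential moments\<close>

lemma exp_partial_sum_le:
  fixes y :: real
  assumes "0 \<le> y"
  shows "(\<Sum>k<N. y^k / fact k) \<le> exp y"
proof -
  have s: "(\<lambda>k. y^k / fact k) sums exp y"
    using exp_converges[of y] by (simp add: divide_inverse mult.commute)
  have "(\<Sum>k<N. y^k / fact k) \<le> suminf (\<lambda>k. y^k / fact k)"
    by (rule sum_le_suminf) (use s sums_summable assms in auto)
  then show ?thesis using sums_unique[OF s] by simp
qed

lemma integral_exp_partial_sum_weight:
  fixes q :: "real \<Rightarrow> real"
  assumes cont: "continuous_on {0..b} q"
  shows "integral {0..b} (\<lambda>v. (1 - (\<Sum>k<Suc K. (- y * exp (real n * v))^k / fact k)) * q v)
       = - (\<Sum>k<K. (- y)^Suc k / fact (Suc k) * integral {0..b} (\<lambda>v. exp (real (Suc k * n) * v) * q v))"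
proof -
  define c where "c k = (- y)^k / fact k" for k :: nat
  define m where "m N = integral {0..b} (\<lambda>v. exp (real N * v) * q v)" for N :: nat
  have expand: "(1 - (\<Sum>k<Suc K. (- y * exp (real n * v))^k / fact k)) * q v
      = q v - (\<Sum>k<Suc K. c k * (exp (real (k * n) * v) * q v))" for v
  proof -
    have ck: "(- y * exp (real n * v))^k / fact k = c k * exp (real (k * n) * v)" for k
    proof -
      have "exp (real (k * n) * v) = exp (real k * (real n * v))" by (simp add: mult.assoc)
      also have "\<dots> = exp (real n * v) ^ k" by (rule exp_of_nat_mult)
      finally show ?thesis by (simp only: c_def power_mult_distrib) simp
    qed
    have "(1 - (\<Sum>k<Suc K. (- y * exp (real n * v))^k / fact k)) * q v
        = (1 - (\<Sum>k<Suc K. c k * exp (real (k * n) * v))) * q v"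
      by (simp only: ck)
    also have "\<dots> = q v - (\<Sum>k<Suc K. c k * (exp (real (k * n) * v) * q v))"
      by (simp only: left_diff_distrib sum_distrib_right mult.assoc mult_1)
    finally show ?thesis .
  qed
  have ints: "(\<lambda>v. c k * (exp (real (k * n) * v) * q v)) integrable_on {0..b}" for k
    by (intro integrable_continuous_real continuous_intros cont)
  have "integral {0..b} (\<lambda>v. \<Sum>k<Suc K. c k * (exp (real (k * n) * v) * q v))
      = (\<Sum>k<Suc K. c k * m (k * n))"
    using ints by (simp add: Henstock_Kurzweil_Integration.integral_sum m_def del: sum.lessThan_Suc)
  moreover have "q integrable_on {0..b}"
    by (rule integrable_continuous_real[OF cont])
  ultimately have "integral {0..b} (\<lambda>v. q v - (\<Sum>k<Suc K. c k * (exp (real (k * n) * v) * q v)))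
      = integral {0..b} q - (\<Sum>k<Suc K. c k * m (k * n))"
    using ints by (simp add: integral_diff Henstock_Kurzweil_Integration.integrable_sum
        del: sum.lessThan_Suc)
  also have "\<dots> = - (\<Sum>k<K. c (Suc k) * m (Suc k * n))"
    by (simp only: sum.lessThan_Suc_shift) (simp add: c_def m_def)
  finally show ?thesis by (simp only: expand c_def m_def)
qed

lemma exp_moment_partial_sum_bound:
  fixes q :: "real \<Rightarrow> real"
  assumes cont: "continuous_on {0..b} q" and y: "0 \<le> y"
    and bnd: "\<And>n::nat. \<bar>integral {0..b} (\<lambda>v. exp (real n * v) * q v)\<bar> \<le> M"
  shows "\<bar>integral {0..b} (\<lambda>v. (1 - (\<Sum>k<Suc K. (- y * exp (real n * v))^k / fact k)) * q v)\<bar>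
           \<le> M * (exp y - 1)"
proof -
  have "\<bar>\<Sum>k<K. (- y)^Suc k / fact (Suc k) * integral {0..b} (\<lambda>v. exp (real (Suc k * n) * v) * q v)\<bar>
      \<le> (\<Sum>k<K. y^Suc k / fact (Suc k) * M)"
  proof (rule order_trans[OF sum_abs sum_mono])
    fix k
    show "\<bar>(- y)^Suc k / fact (Suc k) * integral {0..b} (\<lambda>v. exp (real (Suc k * n) * v) * q v)\<bar>
        \<le> y^Suc k / fact (Suc k) * M"
      unfolding abs_mult using y by (intro mult_mono bnd) (simp_all add: power_abs abs_mult)
  qed
  also have "\<dots> = (\<Sum>k<K. y^Suc k / fact (Suc k)) * M"
    by (rule sum_distrib_right[symmetric])
  also have "\<dots> = ((\<Sum>k<Suc K. y^k / fact k) - 1) * M"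
    by (simp only: sum.lessThan_Suc_shift) simp
  also have "\<dots> \<le> (exp y - 1) * M"
    using exp_partial_sum_le[OF y, of "Suc K"] bnd[of 0] by (intro mult_right_mono) auto
  finally show ?thesis
    unfolding integral_exp_partial_sum_weight[OF cont] abs_minus_cancel by (simp only: mult.commute)
qed

lemma exp_moment_double_exp_bound:
  fixes q :: "real \<Rightarrow> real"
  assumes cont: "continuous_on {0..b} q" and y: "0 \<le> y"
    and bnd: "\<And>n::nat. \<bar>integral {0..b} (\<lambda>v. exp (real n * v) * q v)\<bar> \<le> M"
  shows "\<bar>integral {0..b} (\<lambda>v. (1 - exp (- y * exp (real n * v))) * q v)\<bar> \<le> M * (exp y - 1)"
proof -
  define w where "w v = y * exp (real n * v)" for v
  define fK where "fK K v = (1 - (\<Sum>k<Suc K. (- w v)^k / fact k)) * q v" for K v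
  define B where "B = 1 + exp (y * exp (real n * \<bar>b\<bar>))"
  have "(\<lambda>K. integral {0..b} (fK K)) \<longlonglongrightarrow> integral {0..b} (\<lambda>v. (1 - exp (- w v)) * q v)"
  proof (rule dominated_convergence(2))
    show "fK K integrable_on {0..b}" for K
      unfolding fK_def w_def by (intro integrable_continuous_real continuous_intros cont) auto
    show "(\<lambda>v. B * \<bar>q v\<bar>) integrable_on {0..b}"
      by (intro integrable_continuous_real continuous_intros cont)
    show "norm (fK K v) \<le> B * \<bar>q v\<bar>" if v: "v \<in> {0..b}" for K v
    proof -
      have w0: "0 \<le> w v" using y by (simp add: w_def)
      have "\<bar>\<Sum>k<Suc K. (- w v)^k / fact k\<bar> \<le> (\<Sum>k<Suc K. w v^k / fact k)"
        using sum_abs[of "\<lambda>k. (- w v)^k / fact k" "{..<Suc K}"] w0 by (simp add: power_abs)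
      also have "\<dots> \<le> exp (w v)" by (rule exp_partial_sum_le[OF w0])
      also have "\<dots> \<le> exp (y * exp (real n * \<bar>b\<bar>))"
        using v y by (auto simp: w_def intro!: mult_left_mono)
      finally have "\<bar>1 - (\<Sum>k<Suc K. (- w v)^k / fact k)\<bar> \<le> B" by (simp add: B_def)
      then show ?thesis by (simp add: fK_def abs_mult mult_right_mono)
    qed
    show "(\<lambda>K. fK K v) \<longlonglongrightarrow> (1 - exp (- w v)) * q v" for v
    proof -
      have "(\<lambda>K. \<Sum>k<K. (- w v)^k / fact k) \<longlonglongrightarrow> exp (- w v)"
        using exp_converges[of "- w v"] by (simp add: sums_def divide_inverse mult.commute)
      then show ?thesis
        unfolding fK_def by (intro tendsto_intros) (rule LIMSEQ_Suc)
    qed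
  qed
  moreover have "\<bar>integral {0..b} (fK K)\<bar> \<le> M * (exp y - 1)" for K
    unfolding fK_def w_def using exp_moment_partial_sum_bound[OF cont y bnd] by simp
  ultimately show ?thesis
    unfolding w_def by (intro LIMSEQ_le_const2[OF tendsto_rabs]) auto
qed

lemma double_exp_weight_tendsto:
  fixes q :: "real \<Rightarrow> real"
  assumes cont: "continuous_on {0..b} q" and x: "0 < x" "x < b"
  shows "(\<lambda>n::nat. integral {0..b} (\<lambda>v. (1 - exp (- exp (real n * (v - x)))) * q v))
           \<longlonglongrightarrow> integral {x..b} q"
proof -
  define L where "L v = (if v < x then 0 else if v = x then (1 - exp (-1)) * q v else q v)" for v
  have "(\<lambda>n::nat. integral {0..b} (\<lambda>v. (1 - exp (- exp (real n * (v - x)))) * q v))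
          \<longlonglongrightarrow> integral {0..b} L"
  proof (rule dominated_convergence(2))
    show "(\<lambda>v. (1 - exp (- exp (real n * (v - x)))) * q v) integrable_on {0..b}" for n
      by (intro integrable_continuous_real continuous_intros cont)
    show "(\<lambda>v. \<bar>q v\<bar>) integrable_on {0..b}"
      by (intro integrable_continuous_real continuous_intros cont)
    show "norm ((1 - exp (- exp (real n * (v - x)))) * q v) \<le> \<bar>q v\<bar>" for n v
    proof -
      have "\<bar>1 - exp (- exp (real n * (v - x)))\<bar> \<le> 1" by simp
      then show ?thesis
        unfolding real_norm_def abs_mult by (rule mult_left_le_one_le[OF abs_ge_zero abs_ge_zero])
    qed
    show "(\<lambda>n. (1 - exp (- exp (real n * (v - x)))) * q v) \<longlonglongrightarrow> L v" for v
    proof -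
      consider "v < x" | "v = x" | "v > x" by linarith
      then show ?thesis
      proof cases
        case 1
        have "(\<lambda>n::nat. 1 - exp (- exp (real n * (v - x)))) \<longlonglongrightarrow> 0"
          using 1 by real_asymp
        then show ?thesis using 1 tendsto_mult_left_zero by (simp add: L_def)
      next
        case 3
        have "(\<lambda>n::nat. 1 - exp (- exp (real n * (v - x)))) \<longlonglongrightarrow> 1"
          using 3 by real_asymp
        then show ?thesis using 3 tendsto_mult_right[of _ 1 _ "q v"] by (simp add: L_def)
      qed (simp add: L_def)
    qed
  qed
  moreover have "integral {0..b} L = integral {x..b} q"
  proof -
    have "integral {0..b} L = integral {0..b} (\<lambda>v. if v \<in> {x..} then q v else 0)"
      by (rule integral_spike[of "{x}"]) (auto simp: L_def)
    also have "\<dots> = integral {x..b} q"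
      using x integral_restrict_Int[of "{0..b}" "{x..}" q] by (simp add: Int_commute Int_atLeastAtMost)
    finally show ?thesis .
  qed
  ultimately show ?thesis by simp
qed

lemma exp_moments_bounded_imp_zero:
  fixes q :: "real \<Rightarrow> real"
  assumes b: "0 < b" and cont: "continuous_on {0..b} q"
    and bnd: "\<And>n::nat. \<bar>integral {0..b} (\<lambda>v. exp (real n * v) * q v)\<bar> \<le> M"
  shows "\<forall>v\<in>{0..b}. q v = 0"
proof -
  have tail: "integral {x..b} q = 0" if x: "0 < x" "x < b" for x
  proof -
    have exp_shift: "exp (- (real n * x)) * exp (real n * v) = exp (real n * (v - x))" for n :: nat and v
      by (simp add: mult_exp_exp right_diff_distrib)
    have "\<bar>integral {0..b} (\<lambda>v. (1 - exp (- exp (- (real n * x)) * exp (real n * v))) * q v)\<bar>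
        \<le> M * (exp (exp (- (real n * x))) - 1)" for n :: nat
      by (rule exp_moment_double_exp_bound[OF cont _ bnd]) simp
    then have bound: "\<bar>integral {0..b} (\<lambda>v. (1 - exp (- exp (real n * (v - x)))) * q v)\<bar>
        \<le> M * (exp (exp (- (real n * x))) - 1)" for n :: nat
      by (simp only: mult_minus_left exp_shift)
    have "(\<lambda>n::nat. integral {0..b} (\<lambda>v. (1 - exp (- exp (real n * (v - x)))) * q v)) \<longlonglongrightarrow> 0"
    proof (rule Lim_null_comparison)
      show "\<forall>\<^sub>F n in sequentially. norm (integral {0..b} (\<lambda>v. (1 - exp (- exp (real n * (v - x)))) * q v))
              \<le> M * (exp (exp (- (real n * x))) - 1)"
        using bound by (intro always_eventually) simp
      show "(\<lambda>n::nat. M * (exp (exp (- (real n * x))) - 1)) \<longlonglongrightarrow> 0"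
        using x by real_asymp
    qed
    then show ?thesis
      using double_exp_weight_tendsto[OF cont x] LIMSEQ_unique by blast
  qed
  have "q y = 0" if y: "0 < y" "y < b" for y
  proof -
    have "((\<lambda>z. integral {z..b} q) has_real_derivative - q y) (at y)"
      using integral_has_real_derivative'[OF cont, of y] y at_within_Icc_at[of 0 y b] by simp
    moreover have "((\<lambda>z. integral {z..b} q) has_real_derivative 0) (at y)"
    proof (rule has_field_derivative_transform_within_open[OF DERIV_const open_greaterThanLessThan])
      show "y \<in> {0<..<b}" using y by simp
      show "\<And>z. z \<in> {0<..<b} \<Longrightarrow> 0 = integral {z..b} q" using tail by simp
    qed
    ultimately show ?thesis using DERIV_unique by fastforce
  qed
  moreover have "closed {z \<in> {0..b}. q z = 0}"
    by (rule continuous_closed_preimage_constant[OF cont]) simp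
  ultimately have "closure {0<..<b} \<subseteq> {z \<in> {0..b}. q z = 0}"
    by (intro closure_minimal) auto
  then show ?thesis using closure_greaterThanLessThan[OF b] by auto
qed

section \<open>Titchmarsh's theorem for squares\<close>

lemma abs_integral_le_integral:
  fixes f g :: "real \<Rightarrow> real"
  assumes "f integrable_on S" "g integrable_on S" "\<And>x. x \<in> S \<Longrightarrow> \<bar>f x\<bar> \<le> g x"
  shows "\<bar>integral S f\<bar> \<le> integral S g"
  using Henstock_Kurzweil_Integration.integral_norm_bound_integral[of f S g] assms by simp

lemma abs_integral_weighted_le:
  fixes p w :: "real \<Rightarrow> real"
  assumes "continuous_on {a..b} p" "continuous_on {a..b} w" "\<And>x. x \<in> {a..b} \<Longrightarrow> \<bar>w x\<bar> \<le> 1"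
  shows "\<bar>integral {a..b} (\<lambda>x. w x * p x)\<bar> \<le> integral {a..b} (\<lambda>x. \<bar>p x\<bar>)"
proof (rule abs_integral_le_integral)
  show "(\<lambda>x. w x * p x) integrable_on {a..b}" "(\<lambda>x. \<bar>p x\<bar>) integrable_on {a..b}"
    using assms by (auto intro!: integrable_continuous_real continuous_intros)
  show "\<bar>w x * p x\<bar> \<le> \<bar>p x\<bar>" if "x \<in> {a..b}" for x
    unfolding abs_mult using assms(3)[OF that] by (rule mult_left_le_one_le[OF abs_ge_zero abs_ge_zero])
qed

lemma integral_abs_subinterval_le:
  fixes p :: "real \<Rightarrow> real"
  assumes "continuous_on {c..d} p" "c \<le> a" "b \<le> d"
  shows "integral {a..b} (\<lambda>x. \<bar>p x\<bar>) \<le> integral {c..d} (\<lambda>x. \<bar>p x\<bar>)"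
proof (cases "a \<le> b")
  case True
  with assms show ?thesis
    by (intro integral_subset_le integrable_continuous_real continuous_intros)
       (auto intro: continuous_on_subset)
next
  case False
  have "0 \<le> integral {c..d} (\<lambda>x. \<bar>p x\<bar>)"
    using assms by (intro integral_nonneg integrable_continuous_real continuous_intros) auto
  then show ?thesis using False by simp
qed

lemma exp_weighted_conv_self:
  assumes p: "causal p" and B: "0 \<le> B"
  shows "integral {0..B} (\<lambda>t. exp (c * (d - t)) * conv p p t)
       = integral {0..B} (\<lambda>u. p u * integral {0..B} (\<lambda>t. exp (c * (d - t)) * p (t - u)))"
proof -
  have "continuous_on (cbox (0,0) (B,B)) (\<lambda>(t,u). exp (c * (d - t)) * (p u * p (t - u)))"
    unfolding case_prod_beta' by (intro continuous_intros continuous_on_causal[OF p])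
  then have "integral {0..B} (\<lambda>t. integral {0..B} (\<lambda>u. exp (c * (d - t)) * (p u * p (t - u))))
      = integral {0..B} (\<lambda>u. integral {0..B} (\<lambda>t. exp (c * (d - t)) * (p u * p (t - u))))"
    using integral_swap_continuous by (fastforce simp: box_real)
  moreover have "integral {0..B} (\<lambda>t. exp (c * (d - t)) * conv p p t)
      = integral {0..B} (\<lambda>t. integral {0..B} (\<lambda>u. exp (c * (d - t)) * (p u * p (t - u))))"
    by (rule integral_cong) (simp add: conv_eq_integral_upto[OF p p])
  ultimately show ?thesis by (simp add: mult.left_commute)
qed

lemma continuous_on_exp_weighted_translate:
  assumes p: "causal p"
  shows "continuous_on S (\<lambda>u. integral {0..B} (\<lambda>t. exp (c * (d - t)) * p (t - u)))"
proof -
  have "continuous_on (UNIV \<times> cbox 0 B) (\<lambda>(u,t). exp (c * (d - t)) * p (t - u))"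
    unfolding case_prod_beta' by (intro continuous_intros continuous_on_causal[OF p])
  then have "continuous_on UNIV (\<lambda>u. integral (cbox 0 B) (\<lambda>t. exp (c * (d - t)) * p (t - u)))"
    by (rule integral_continuous_on_param)
  then show ?thesis by (auto simp: box_real intro: continuous_on_subset)
qed

lemma integral_exp_weighted_translate:
  assumes p: "causal p" and u: "u \<in> {0..B}"
  shows "integral {0..B} (\<lambda>t. exp (c * (d - t)) * p (t - u))
       = integral {0..B - u} (\<lambda>r. exp (c * (d - u - r)) * p r)"
proof -
  have "integral {0..B} (\<lambda>t. exp (c * (d - t)) * p (t - u))
      = integral {-u..B - u} (\<lambda>r. exp (c * (d - u - r)) * p r)"
    using integral_shift_ivl[of 0 B "\<lambda>t. exp (c * (d - t)) * p (t - u)" u]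
    by (simp add: algebra_simps)
  also have "\<dots> = integral {0..B - u} (\<lambda>r. exp (c * (d - u - r)) * p r)"
    by (rule integral_zero_left)
       (use u in \<open>auto simp: causal_zero[OF p]
          intro!: integrable_continuous_real continuous_intros causal_continuous_on[OF p]\<close>)
  finally show ?thesis .
qed

lemma integral_exp_weighted_split:
  fixes p :: "real \<Rightarrow> real"
  assumes "continuous_on {0..2*d - u} p" "u \<in> {0..d}"
  shows "integral {0..2*d - u} (\<lambda>r. exp (c * (d - u - r)) * p r)
       = exp (c * (d/2 - u)) * integral {0..d} (\<lambda>r. exp (c * (d/2 - r)) * p r)
         + integral {d..2*d - u} (\<lambda>r. exp (c * (d - u - r)) * p r)"
proof -
  have "exp (c * (d - u - r)) * p r = exp (c * (d/2 - u)) * (exp (c * (d/2 - r)) * p r)" for r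
    by (simp add: mult_exp_exp algebra_simps)
  then have "integral {0..d} (\<lambda>r. exp (c * (d - u - r)) * p r)
      = integral {0..d} (\<lambda>r. exp (c * (d/2 - u)) * (exp (c * (d/2 - r)) * p r))"
    by (simp only:)
  also have "\<dots> = exp (c * (d/2 - u)) * integral {0..d} (\<lambda>r. exp (c * (d/2 - r)) * p r)"
    by simp
  finally have "integral {0..d} (\<lambda>r. exp (c * (d - u - r)) * p r)
      = exp (c * (d/2 - u)) * integral {0..d} (\<lambda>r. exp (c * (d/2 - r)) * p r)" .
  moreover have "(\<lambda>r. exp (c * (d - u - r)) * p r) integrable_on {0..2*d - u}"
    using assms(1) by (intro integrable_continuous_real continuous_intros)
  ultimately show ?thesis
    using Henstock_Kurzweil_Integration.integral_combine[of 0 d "2*d - u"] assms(2) by fastforce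
qed

lemma abs_integral_exp_weight_le:
  fixes p :: "real \<Rightarrow> real"
  assumes p: "continuous_on {a..b} p" and du: "d \<le> u + a"
  shows "\<bar>integral {a..b} (\<lambda>r. exp (real n * (d - u - r)) * p r)\<bar> \<le> integral {a..b} (\<lambda>r. \<bar>p r\<bar>)"
  using du by (intro abs_integral_weighted_le p continuous_intros) (auto simp: mult_nonneg_nonpos)

lemma exp_weighted_translate_bound_far:
  assumes p: "causal p" and u: "u \<in> {d..2*d}"
  shows "\<bar>integral {0..2*d} (\<lambda>t. exp (real n * (d - t)) * p (t - u))\<bar> \<le> integral {0..2*d} (\<lambda>r. \<bar>p r\<bar>)"
proof -
  have "\<bar>integral {0..2*d - u} (\<lambda>r. exp (real n * (d - u - r)) * p r)\<bar> \<le> integral {0..2*d - u} (\<lambda>r. \<bar>p r\<bar>)"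
    using u by (intro abs_integral_exp_weight_le causal_continuous_on[OF p]) auto
  also have "\<dots> \<le> integral {0..2*d} (\<lambda>r. \<bar>p r\<bar>)"
    using u by (intro integral_abs_subinterval_le causal_continuous_on[OF p]) auto
  finally show ?thesis using u by (simp add: integral_exp_weighted_translate[OF p])
qed

lemma exp_weighted_translate_bound_near:
  assumes p: "causal p" and u: "u \<in> {0..d}"
  shows "\<bar>integral {0..2*d} (\<lambda>t. exp (real n * (d - t)) * p (t - u))
           - exp (real n * (d/2 - u)) * integral {0..d} (\<lambda>r. exp (real n * (d/2 - r)) * p r)\<bar>
         \<le> integral {0..2*d} (\<lambda>r. \<bar>p r\<bar>)"
proof -
  have "\<bar>integral {d..2*d - u} (\<lambda>r. exp (real n * (d - u - r)) * p r)\<bar> \<le> integral {d..2*d - u} (\<lambda>r. \<bar>p r\<bar>)"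
    using u by (intro abs_integral_exp_weight_le causal_continuous_on[OF p]) auto
  also have "\<dots> \<le> integral {0..2*d} (\<lambda>r. \<bar>p r\<bar>)"
    using u by (intro integral_abs_subinterval_le causal_continuous_on[OF p]) auto
  finally show ?thesis
    using u by (simp add: integral_exp_weighted_translate[OF p] integral_exp_weighted_split
        causal_continuous_on[OF p])
qed

text \<open>Weighting \<open>conv p p = 0\<close> with \<open>exp (n (d - t))\<close> and integrating over \<open>[0, 2d]\<close> gives
  a double integral over the triangle \<open>u + r \<le> 2d\<close>: the square \<open>[0, d]\<^sup>2\<close> contributes \<open>A\<^sup>2\<close>,
  and on the rest the weight is at most \<open>1\<close>.\<close>

lemma conv_self_zero_exp_moment_bound:
  assumes p: "causal p" and d: "0 < d" and vz: "\<And>t. t \<le> 2*d \<Longrightarrow> conv p p t = 0"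
  shows "\<bar>integral {0..d/2} (\<lambda>r. exp (real n * (d/2 - r)) * p r)\<bar>
           \<le> 3 * integral {0..2*d} (\<lambda>r. \<bar>p r\<bar>)"
proof -
  note cont = causal_continuous_on[OF p]
  define C where "C = integral {0..2*d} (\<lambda>r. \<bar>p r\<bar>)"
  define E where "E x = exp (real n * (d/2 - x))" for x
  define A where "A = integral {0..d} (\<lambda>r. E r * p r)"
  define J where "J u = integral {0..2*d} (\<lambda>t. exp (real n * (d - t)) * p (t - u))" for u
  have C: "integral {a..b} (\<lambda>r. \<bar>p r\<bar>) \<le> C" if "0 \<le> a" "b \<le> 2*d" for a b
    unfolding C_def using that by (intro integral_abs_subinterval_le cont)
  have C0: "0 \<le> C" using C[of 0 0] d by simp
  have pJ: "(\<lambda>u. p u * J u) integrable_on {a..b}" for a b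
    unfolding J_def by (intro integrable_continuous_real continuous_intros cont
        continuous_on_exp_weighted_translate[OF p])
  have "integral {0..2*d} (\<lambda>u. p u * J u) = integral {0..2*d} (\<lambda>t. exp (real n * (d - t)) * conv p p t)"
    unfolding J_def using d by (simp add: exp_weighted_conv_self[OF p])
  also have "\<dots> = integral {0..2*d} (\<lambda>_. 0)"
    by (rule integral_cong) (simp add: vz)
  finally have zero: "integral {0..d} (\<lambda>u. p u * J u) + integral {d..2*d} (\<lambda>u. p u * J u) = 0"
    using Henstock_Kurzweil_Integration.integral_combine[OF _ _ pJ, of 0 d "2*d"] d by simp
  have "\<bar>integral {d..2*d} (\<lambda>u. p u * J u)\<bar> \<le> integral {d..2*d} (\<lambda>u. C * \<bar>p u\<bar>)"
    using exp_weighted_translate_bound_far[OF p]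
    by (intro abs_integral_le_integral pJ integrable_continuous_real continuous_intros cont)
       (auto simp: J_def C_def abs_mult mult.commute mult_left_mono)
  also have "\<dots> \<le> C * C" using C[of d "2*d"] d C0 by (simp add: mult_left_mono)
  finally have far: "\<bar>integral {d..2*d} (\<lambda>u. p u * J u)\<bar> \<le> C * C" .
  have EA: "(\<lambda>u. A * (E u * p u)) integrable_on {0..d}"
    unfolding E_def by (intro integrable_continuous_real continuous_intros cont)
  have "\<bar>p u * J u - A * (E u * p u)\<bar> \<le> C * \<bar>p u\<bar>" if "u \<in> {0..d}" for u
  proof -
    have "\<bar>J u - E u * A\<bar> \<le> C"
      using exp_weighted_translate_bound_near[OF p that, of n] by (simp add: J_def E_def A_def C_def)
    then have "\<bar>p u\<bar> * \<bar>J u - E u * A\<bar> \<le> \<bar>p u\<bar> * C" by (rule mult_left_mono) simp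
    moreover have "p u * J u - A * (E u * p u) = p u * (J u - E u * A)" by (simp add: algebra_simps)
    ultimately show ?thesis by (simp add: abs_mult mult.commute)
  qed
  then have "\<bar>integral {0..d} (\<lambda>u. p u * J u - A * (E u * p u))\<bar> \<le> integral {0..d} (\<lambda>u. C * \<bar>p u\<bar>)"
    by (intro abs_integral_le_integral integrable_diff[OF pJ EA] integrable_continuous_real
        continuous_intros cont)
  also have "\<dots> \<le> C * C" using C[of 0 d] d C0 by (simp add: mult_left_mono)
  finally have "\<bar>integral {0..d} (\<lambda>u. p u * J u - A * (E u * p u))\<bar> \<le> C * C" .
  moreover have "integral {0..d} (\<lambda>u. A * (E u * p u)) = A * A"
    unfolding A_def E_def by (intro integral_mult[symmetric] integrable_continuous_real continuous_intros cont)
  ultimately have near: "\<bar>integral {0..d} (\<lambda>u. p u * J u) - A * A\<bar> \<le> C * C"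
    by (simp only: integral_diff[OF pJ EA])
  have "A * A \<le> (2 * C) * (2 * C)"
    using zero far near by linarith
  then have "\<bar>A\<bar> \<le> 2 * C"
    using C0 abs_le_square_iff[of A "2 * C"] by (simp add: power2_eq_square)
  moreover have "integral {0..d/2} (\<lambda>r. E r * p r) + integral {d/2..d} (\<lambda>r. E r * p r) = A"
    unfolding A_def E_def using d
    by (intro Henstock_Kurzweil_Integration.integral_combine integrable_continuous_real continuous_intros cont)
       auto
  moreover have "\<bar>integral {d/2..d} (\<lambda>r. E r * p r)\<bar> \<le> C"
  proof -
    have "\<bar>integral {d/2..d} (\<lambda>r. exp (real n * (d/2 - 0 - r)) * p r)\<bar> \<le> integral {d/2..d} (\<lambda>r. \<bar>p r\<bar>)"
      by (rule abs_integral_exp_weight_le[OF cont]) simp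
    then show ?thesis using C[of "d/2" d] d by (simp add: E_def)
  qed
  ultimately show ?thesis by (simp add: E_def C_def)
qed

lemma conv_self_zero_imp_zero_half:
  assumes p: "causal p" and d: "0 < d" and vz: "\<And>t. t \<le> 2*d \<Longrightarrow> conv p p t = 0"
    and x: "x \<le> d/2"
  shows "p x = 0"
proof (cases "x \<le> 0")
  case True
  then show ?thesis using causal_zero[OF p] by simp
next
  case False
  define q where "q v = p (d/2 - v)" for v
  have "continuous_on {0..d/2} q"
    unfolding q_def by (intro continuous_on_causal[OF p] continuous_intros)
  moreover have "\<bar>integral {0..d/2} (\<lambda>v. exp (real n * v) * q v)\<bar> \<le> 3 * integral {0..2*d} (\<lambda>r. \<bar>p r\<bar>)"
    for n :: nat
    using conv_self_zero_exp_moment_bound[OF p d vz, of n]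
      integral_reflect_ivl[of "d/2" "\<lambda>r. exp (real n * (d/2 - r)) * p r"]
    by (simp add: q_def)
  ultimately have "\<forall>v\<in>{0..d/2}. q v = 0"
    using d by (intro exp_moments_bounded_imp_zero) auto
  then have "q (d/2 - x) = 0" using x False by simp
  then show ?thesis by (simp add: q_def)
qed

lemma conv_self_zero_imp_zero:
  assumes p: "causal p" and vz: "\<And>t. t \<le> 2*c \<Longrightarrow> conv p p t = 0" and x: "x \<le> c"
  shows "p x = 0"
proof (cases "c \<le> 0")
  case True
  then show ?thesis using x causal_zero[OF p] by simp
next
  case False
  define S where "S = {a. 0 \<le> a \<and> a \<le> c \<and> (\<forall>x<a. p x = 0)}"
  define a0 where "a0 = Sup S"
  have S0: "0 \<in> S" using False causal_zero[OF p] by (auto simp: S_def)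
  have bdd: "bdd_above S" by (auto simp: S_def bdd_above_def)
  have a0_ub: "a \<le> a0" if "a \<in> S" for a
    unfolding a0_def using cSup_upper[OF that bdd] .
  have a0c: "a0 \<le> c" unfolding a0_def using S0 by (intro cSup_least) (auto simp: S_def)
  have a00: "0 \<le> a0" using a0_ub[OF S0] .
  have "p x = 0" if x: "x < a0" for x
  proof -
    obtain a where "a \<in> S" "x < a" using less_cSupD[of S x] S0 bdd x by (auto simp: a0_def)
    then show ?thesis by (auto simp: S_def)
  qed
  then have below_a0: "p x = 0" if "x \<le> a0" for x
    using continuous_zero_below_imp_zero_le[OF causal_continuous_on[OF p]] that by blast
  \<comment> \<open>if \<open>a0 < c\<close>, the half lemma applied to \<open>p\<close> shifted by \<open>a0\<close> pushes \<open>a0\<close> further\<close>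
  have "a0 = c"
  proof (rule ccontr)
    assume "a0 \<noteq> c"
    then have lt: "a0 < c" using a0c by simp
    define q where "q = (\<lambda>x. p (x + a0))"
    have q: "causal q" unfolding q_def by (rule causal_shift[OF p below_a0 a00])
    have "conv q q t = 0" if "t \<le> 2 * (c - a0)" for t
      using conv_self_shift[OF p below_a0 a00, of t] vz[of "t + 2*a0"] that by (simp add: q_def)
    then have q_zero: "q x = 0" if "x \<le> (c - a0)/2" for x
      using conv_self_zero_imp_zero_half[OF q, of "c - a0" x] lt that by simp
    have "p x = 0" if "x < a0 + (c - a0)/2" for x
    proof -
      have "x - a0 \<le> (c - a0)/2" using that by linarith
      then show ?thesis using q_zero[of "x - a0"] by (simp add: q_def)
    qed
    then have "a0 + (c - a0)/2 \<in> S"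
      using lt a00 by (auto simp: S_def field_simps)
    then show False using a0_ub lt by fastforce
  qed
  then show ?thesis using below_a0 x by simp
qed

section \<open>Titchmarsh's convolution theorem\<close>

lemma titchmarsh_step:
  assumes F: "causal F" and G: "causal G"
    and sum: "\<And>t. F t + G t = t * P t"
    and P0: "\<And>t. t \<le> a \<Longrightarrow> P t = 0"
    and F0: "\<And>t. t \<le> b \<Longrightarrow> F t = 0"
    and FG0: "\<And>t. t \<le> a + b' \<Longrightarrow> conv F G t = 0"
    and x: "x \<le> (a + min b b')/2"
  shows "F x = 0"
proof (rule conv_self_zero_imp_zero[OF F _ x])
  fix t assume t: "t \<le> 2 * ((a + min b b')/2)"
  have "integral {0..t} (\<lambda>u. F u * F (t - u)) = integral {0..t} (\<lambda>u. - (F u * G (t - u)))"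
  proof (rule integral_cong)
    fix u
    show "F u * F (t - u) = - (F u * G (t - u))"
    proof (cases "u \<le> b")
      case False
      then have "t - u \<le> a" using t by simp
      then have "F (t - u) = - G (t - u)" using sum[of "t - u"] P0 by simp
      then show ?thesis by simp
    qed (simp add: F0)
  qed
  then show "conv F F t = 0"
    using FG0[of t] t by (simp add: conv_def integral_neg)
qed

text \<open>After a first drop by \<open>\<delta>\<close>, the inequality forces the sequence to keep dropping by at
  least \<open>\<delta>\<close> in every step, so it would leave \<open>[0, T]\<close>.\<close>

lemma midpoint_bound_imp_const:
  fixes r :: "nat \<Rightarrow> real"
  assumes r0: "r 0 = T" and nonneg: "\<And>n. 0 \<le> r n" and le: "\<And>n. r n \<le> T"
    and step: "\<And>m. (r m + min (r (Suc m)) (r (Suc (Suc m))))/2 \<le> r (Suc m)"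
  shows "r n = T"
proof (rule ccontr)
  assume "r n \<noteq> T"
  then have ex: "\<exists>n. r n < T" using le[of n] by (intro exI[of _ n]) simp
  define n0 where "n0 = (LEAST n. r n < T)"
  have n0: "r n0 < T" unfolding n0_def by (rule LeastI_ex[OF ex])
  then obtain m0 where m0: "n0 = Suc m0" using r0 by (cases n0) auto
  have "r m0 = T" using not_less_Least[of m0 "\<lambda>n. r n < T"] le[of m0] m0 by (simp add: n0_def)
  define \<delta> where "\<delta> = T - r n0"
  have \<delta>: "0 < \<delta>" using n0 by (simp add: \<delta>_def)
  have drop: "\<delta> \<le> r (m0 + i) - r (Suc m0 + i)" for i
  proof (induction i)
    case 0
    then show ?case using \<open>r m0 = T\<close> m0 by (simp add: \<delta>_def)
  next
    case (Suc i)
    then show ?case using step[of "m0 + i"] \<delta> by (auto simp: min_def split: if_splits)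
  qed
  have "real (Suc i) * \<delta> \<le> T - r (Suc m0 + i)" for i
  proof (induction i)
    case 0
    then show ?case using drop[of 0] \<open>r m0 = T\<close> by simp
  next
    case (Suc i)
    then show ?case using drop[of "Suc i"] by (simp add: algebra_simps)
  qed
  moreover obtain i :: nat where "T < real i * \<delta>" using reals_Archimedean3[OF \<delta>] by blast
  ultimately show False using nonneg[of "Suc m0 + i"] \<delta> by (smt (verit) mult_right_mono of_nat_Suc)
qed

definition weighted_conv :: "(real \<Rightarrow> real) \<Rightarrow> (real \<Rightarrow> real) \<Rightarrow> nat \<Rightarrow> nat \<Rightarrow> real \<Rightarrow> real" where
  "weighted_conv f g j k = conv (\<lambda>x. x ^ j * f x) (\<lambda>x. x ^ k * g x)"

lemma causal_weighted_conv: "causal f \<Longrightarrow> causal g \<Longrightarrow> causal (weighted_conv f g j k)"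
  unfolding weighted_conv_def by (intro causal_conv causal_mult_power)

lemma mult_weighted_conv:
  assumes "causal f" "causal g"
  shows "t * weighted_conv f g j k t = weighted_conv f g (Suc j) k t + weighted_conv f g j (Suc k) t"
  using mult_conv[OF causal_mult_power[OF assms(1)] causal_mult_power[OF assms(2)], of t j k]
  by (simp add: weighted_conv_def mult.assoc)

lemma conv_weighted_conv_exchange:
  assumes "causal f" "causal g"
  shows "conv (weighted_conv f g (Suc j) k) (weighted_conv f g j (Suc k))
       = conv (weighted_conv f g (Suc j) (Suc k)) (weighted_conv f g j k)"
  unfolding weighted_conv_def using assms by (intro conv_exchange causal_mult_power)

lemma weighted_conv_zero_step:
  assumes f: "causal f" and g: "causal g"
    and Z0: "\<And>j k t. j + k = m \<Longrightarrow> t \<le> a \<Longrightarrow> weighted_conv f g j k t = 0"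
    and Z1: "\<And>j k t. j + k = Suc m \<Longrightarrow> t \<le> b \<Longrightarrow> weighted_conv f g j k t = 0"
    and Z2: "\<And>j k t. j + k = Suc (Suc m) \<Longrightarrow> t \<le> b' \<Longrightarrow> weighted_conv f g j k t = 0"
    and jk: "j + k = Suc m" and t: "t \<le> (a + min b b')/2"
  shows "weighted_conv f g j k t = 0"
proof -
  let ?W = "weighted_conv f g"
  have W: "causal (?W j k)" for j k using causal_weighted_conv[OF f g] .
  show ?thesis
  proof (cases j)
    case (Suc i)
    have FG: "conv (?W (Suc i) k) (?W i (Suc k)) s = 0" if "s \<le> a + b'" for s
      unfolding conv_weighted_conv_exchange[OF f g]
      by (rule conv_eq_0_if_vanishing[of b' _ a]) (use that jk Suc Z0 Z2 in auto)
    have sum: "?W (Suc i) k s + ?W i (Suc k) s = s * ?W i k s" for s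
      using mult_weighted_conv[OF f g] by simp
    show ?thesis
      unfolding Suc
      by (rule titchmarsh_step[where a = a and b = b and b' = b', OF W W sum _ _ FG t])
         (use Z0[of i k] Z1[of "Suc i" k] jk Suc in auto)
  next
    case 0
    then obtain i where k: "k = Suc i" using jk by (cases k) auto
    have exchange: "conv (?W 0 (Suc i)) (?W 1 i) = conv (?W 1 (Suc i)) (?W 0 i)"
      using conv_commute[OF W W, of 0 "Suc i" 1 i] conv_weighted_conv_exchange[OF f g, of 0 i] by simp
    have FG: "conv (?W 0 (Suc i)) (?W 1 i) s = 0" if "s \<le> a + b'" for s
      unfolding exchange
      by (rule conv_eq_0_if_vanishing[of b' _ a]) (use that jk 0 k Z0 Z2 in auto)
    have sum: "?W 0 (Suc i) s + ?W 1 i s = s * ?W 0 i s" for s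
      using mult_weighted_conv[OF f g, of s 0 i] by simp
    show ?thesis
      unfolding 0 k
      by (rule titchmarsh_step[where a = a and b = b and b' = b', OF W W sum _ _ FG t])
         (use Z0[of 0 i] Z1[of 0 "Suc i"] jk 0 k in auto)
  qed
qed

lemma weighted_conv_zero:
  assumes f: "causal f" and g: "causal g" and T: "0 \<le> T"
    and fg: "\<And>t. t \<le> T \<Longrightarrow> conv f g t = 0" and t: "t \<le> T"
  shows "weighted_conv f g j k t = 0"
proof -
  let ?W = "weighted_conv f g"
  define S where "S n = {r. 0 \<le> r \<and> r \<le> T \<and> (\<forall>j k. j + k = n \<longrightarrow> (\<forall>t<r. ?W j k t = 0))}" for n
  define \<rho> where "\<rho> n = Sup (S n)" for n
  have S0: "0 \<in> S n" for n
    using causal_zero[OF causal_weighted_conv[OF f g]] T by (auto simp: S_def)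
  have bdd: "bdd_above (S n)" for n by (auto simp: S_def bdd_above_def)
  have \<rho>_ub: "r \<le> \<rho> n" if "r \<in> S n" for r n
    unfolding \<rho>_def using cSup_upper[OF that bdd] .
  have \<rho>_le: "\<rho> n \<le> T" for n
    unfolding \<rho>_def by (rule cSup_least) (use S0[of n] in \<open>auto simp: S_def\<close>)
  have \<rho>_nonneg: "0 \<le> \<rho> n" for n using \<rho>_ub[OF S0] .
  have below: "?W j k t = 0" if jk: "j + k = n" and lt: "t < \<rho> n" for j k n t
  proof -
    obtain r where "r \<in> S n" "t < r" using less_cSupD[of "S n" t] S0 bdd lt by (auto simp: \<rho>_def)
    then show ?thesis using jk by (auto simp: S_def)
  qed
  have zero: "?W j k t = 0" if "j + k = n" "t \<le> \<rho> n" for j k n t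
    using continuous_zero_below_imp_zero_le[OF causal_continuous_on[OF causal_weighted_conv[OF f g]]]
      below[OF that(1)] that(2) by blast
  have "T \<in> S 0"
    using fg T by (auto simp: S_def weighted_conv_def)
  then have \<rho>0: "\<rho> 0 = T" using \<rho>_ub \<rho>_le by (simp add: order_antisym)
  have "(\<rho> m + min (\<rho> (Suc m)) (\<rho> (Suc (Suc m))))/2 \<le> \<rho> (Suc m)" for m
  proof (rule \<rho>_ub)
    have "?W j k t = 0" if "j + k = Suc m" "t \<le> (\<rho> m + min (\<rho> (Suc m)) (\<rho> (Suc (Suc m))))/2" for j k t
      by (rule weighted_conv_zero_step[OF f g _ _ _ that]) (auto intro: zero)
    then show "(\<rho> m + min (\<rho> (Suc m)) (\<rho> (Suc (Suc m))))/2 \<in> S (Suc m)"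
      using \<rho>_nonneg[of m] \<rho>_nonneg[of "Suc m"] \<rho>_nonneg[of "Suc (Suc m)"]
        \<rho>_le[of m] \<rho>_le[of "Suc m"] \<rho>_le[of "Suc (Suc m)"]
      by (auto simp: S_def min_def)
  qed
  then have "\<rho> n = T" for n
    by (rule midpoint_bound_imp_const[of \<rho>, OF \<rho>0 \<rho>_nonneg \<rho>_le])
  then show ?thesis using zero[of j k "j + k" t] t by simp
qed

lemma integral_square_le_if_moments_zero:
  fixes \<phi> :: "real \<Rightarrow> real"
  assumes cont: "continuous_on {0..t} \<phi>"
    and moments: "\<And>k. integral {0..t} (\<lambda>s. s^k * \<phi> s) = 0" and e: "0 < e"
  shows "integral {0..t} (\<lambda>s. \<phi> s * \<phi> s) \<le> e * integral {0..t} (\<lambda>s. \<bar>\<phi> s\<bar>)"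
proof -
  have int: "(\<lambda>s. \<psi> s * \<phi> s) integrable_on {0..t}" if "continuous_on {0..t} \<psi>" for \<psi>
    using that cont by (intro integrable_continuous_real continuous_intros)
  obtain p where "real_polynomial_function p" and approx: "\<And>x. x \<in> {0..t} \<Longrightarrow> \<bar>\<phi> x - p x\<bar> < e"
    using Stone_Weierstrass_real_polynomial_function[OF compact_Icc cont e] by blast
  then obtain a n where p: "p = (\<lambda>x. \<Sum>i\<le>n. a i * x^i)"
    using real_polynomial_function_iff_sum by blast
  have cp: "continuous_on {0..t} p" unfolding p by (intro continuous_intros)
  have "integral {0..t} (\<lambda>s. p s * \<phi> s) = (\<Sum>i\<le>n. a i * integral {0..t} (\<lambda>s. s^i * \<phi> s))"
    unfolding p sum_distrib_right mult.assoc
    by (subst Henstock_Kurzweil_Integration.integral_sum)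
       (auto intro!: integrable_continuous_real continuous_intros cont)
  then have orth: "integral {0..t} (\<lambda>s. p s * \<phi> s) = 0" by (simp add: moments)
  have "integral {0..t} (\<lambda>s. \<phi> s * \<phi> s)
      = integral {0..t} (\<lambda>s. (\<phi> s - p s) * \<phi> s) + integral {0..t} (\<lambda>s. p s * \<phi> s)"
    using int[OF continuous_on_diff[OF cont cp]] int[OF cp]
    by (simp add: integral_add[symmetric] algebra_simps)
  also have "\<dots> \<le> integral {0..t} (\<lambda>s. e * \<bar>\<phi> s\<bar>)"
  proof -
    have "integral {0..t} (\<lambda>s. (\<phi> s - p s) * \<phi> s) \<le> integral {0..t} (\<lambda>s. e * \<bar>\<phi> s\<bar>)"
    proof (rule integral_le[OF int[OF continuous_on_diff[OF cont cp]]])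
      show "(\<lambda>s. e * \<bar>\<phi> s\<bar>) integrable_on {0..t}"
        by (intro integrable_continuous_real continuous_intros cont)
      fix s assume "s \<in> {0..t}"
      then have "\<bar>\<phi> s - p s\<bar> * \<bar>\<phi> s\<bar> \<le> e * \<bar>\<phi> s\<bar>"
        using approx by (intro mult_right_mono) (auto intro: less_imp_le)
      then show "(\<phi> s - p s) * \<phi> s \<le> e * \<bar>\<phi> s\<bar>"
        by (metis abs_ge_self abs_mult order_trans)
    qed
    then show ?thesis using orth by simp
  qed
  finally show ?thesis by simp
qed

lemma moments_zero_imp_zero:
  fixes \<phi> :: "real \<Rightarrow> real"
  assumes t: "0 < t" and cont: "continuous_on {0..t} \<phi>"
    and moments: "\<And>k. integral {0..t} (\<lambda>s. s^k * \<phi> s) = 0"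
    and s: "s \<in> {0..t}"
  shows "\<phi> s = 0"
proof -
  define K where "K = integral {0..t} (\<lambda>s. \<bar>\<phi> s\<bar>)"
  have K: "0 \<le> K" unfolding K_def
    by (rule integral_nonneg) (auto intro!: integrable_continuous_real continuous_intros cont)
  have "integral {0..t} (\<lambda>s. \<phi> s * \<phi> s) \<le> 0"
  proof (rule field_le_epsilon)
    fix e :: real assume e: "0 < e"
    have "integral {0..t} (\<lambda>s. \<phi> s * \<phi> s) \<le> e / (K + 1) * K"
      using integral_square_le_if_moments_zero[OF cont moments, of "e / (K + 1)"] e K
      by (simp add: K_def)
    also have "\<dots> \<le> e" using e K by (simp add: field_simps)
    finally show "integral {0..t} (\<lambda>s. \<phi> s * \<phi> s) \<le> 0 + e" by simp
  qed
  moreover have "0 \<le> integral {0..t} (\<lambda>s. \<phi> s * \<phi> s)"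
    by (rule integral_nonneg) (auto intro!: integrable_continuous_real continuous_intros cont)
  moreover have "(\<lambda>s. \<phi> s * \<phi> s) integrable_on {0..t}"
    by (intro integrable_continuous_real continuous_intros cont)
  ultimately have "((\<lambda>s. \<phi> s * \<phi> s) has_integral 0) (cbox 0 t)"
    by (simp add: box_real has_integral_integral antisym)
  then have "\<phi> s * \<phi> s = 0"
    by (rule has_integral_0_cbox_imp_0[rotated 2]) (use cont t s in \<open>auto simp: box_real intro!: continuous_intros\<close>)
  then show ?thesis by simp
qed

theorem titchmarsh_convolution:
  assumes f: "causal f" and g: "causal g" and T: "0 \<le> T"
    and fg: "\<And>t. t \<le> T \<Longrightarrow> conv f g t = 0"
    and f_nonzero: "\<And>e. 0 < e \<Longrightarrow> \<exists>s. 0 < s \<and> s < e \<and> f s \<noteq> 0"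
    and x: "x \<le> T"
  shows "g x = 0"
proof -
  have pointwise: "f s * g (t - s) = 0" if t: "0 < t" "t \<le> T" and s: "s \<in> {0..t}" for t s
  proof (rule moments_zero_imp_zero[OF t(1) _ _ s])
    show "continuous_on {0..t} (\<lambda>s. f s * g (t - s))"
      by (intro continuous_intros causal_continuous_on[OF f] continuous_on_causal[OF g])
    show "integral {0..t} (\<lambda>s. s^k * (f s * g (t - s))) = 0" for k
      using weighted_conv_zero[OF f g T fg t(2), of k 0] by (simp add: weighted_conv_def conv_def mult.assoc)
  qed
  have "g x = 0" if "x < T" for x
  proof (cases "x \<le> 0")
    case False
    obtain s where s: "0 < s" "s < T - x" "f s \<noteq> 0" using f_nonzero[of "T - x"] \<open>x < T\<close> by auto
    then show ?thesis using pointwise[of "x + s" s] False by simp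
  qed (simp add: causal_zero[OF g])
  then show ?thesis
    using continuous_zero_below_imp_zero_le[OF causal_continuous_on[OF g]] x by blast
qed

section \<open>Translates orthogonal to a piecewise continuous function\<close>

lemma absolutely_integrable_continuous_mult:
  fixes \<phi> k :: "real \<Rightarrow> real"
  assumes "continuous_on {a..b} \<phi>" "k absolutely_integrable_on {a..b}"
  shows "(\<lambda>x. \<phi> x * k x) absolutely_integrable_on {a..b}"
proof -
  have "\<phi> \<in> borel_measurable (lebesgue_on {a..b})"
    by (rule continuous_imp_measurable_on_sets_lebesgue[OF assms(1)]) simp
  moreover have "bounded (\<phi> ` {a..b})"
    by (rule compact_imp_bounded[OF compact_continuous_image[OF assms(1) compact_Icc]])
  ultimately show ?thesis
    using absolutely_integrable_bounded_measurable_product[OF bilinear_times _ _ _ assms(2)] by simp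
qed

lemma integrable_continuous_mult:
  fixes \<phi> k :: "real \<Rightarrow> real"
  assumes "continuous_on {a..b} \<phi>" "k absolutely_integrable_on {a..b}"
  shows "(\<lambda>x. \<phi> x * k x) integrable_on {a..b}"
  using absolutely_integrable_continuous_mult[OF assms] by (simp add: absolutely_integrable_on_def)

lemma abs_integral_continuous_mult_le:
  fixes \<phi> k :: "real \<Rightarrow> real"
  assumes "continuous_on {a..b} \<phi>" "k absolutely_integrable_on {a..b}"
    and "\<And>x. x \<in> {a..b} \<Longrightarrow> \<bar>\<phi> x\<bar> \<le> B"
  shows "\<bar>integral {a..b} (\<lambda>x. \<phi> x * k x)\<bar> \<le> B * integral {a..b} (\<lambda>x. \<bar>k x\<bar>)"
proof -
  have "\<bar>integral {a..b} (\<lambda>x. \<phi> x * k x)\<bar> \<le> integral {a..b} (\<lambda>x. B * \<bar>k x\<bar>)"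
  proof (rule abs_integral_le_integral[OF integrable_continuous_mult[OF assms(1,2)]])
    show "(\<lambda>x. B * \<bar>k x\<bar>) integrable_on {a..b}"
      using assms(2) unfolding absolutely_integrable_on_def by (intro integrable_on_mult_right) simp
    show "\<bar>\<phi> x * k x\<bar> \<le> B * \<bar>k x\<bar>" if "x \<in> {a..b}" for x
      using assms(3)[OF that] by (simp add: abs_mult mult_right_mono)
  qed
  then show ?thesis by simp
qed

lemma mvt_open_interval:
  fixes H h :: "real \<Rightarrow> real"
  assumes deriv: "\<And>y. y \<in> {-R<..<R} \<Longrightarrow> (H has_real_derivative h y) (at y)"
    and ab: "a \<in> {-R<..<R}" "b \<in> {-R<..<R}"
  shows "\<exists>\<xi>\<in>{-R<..<R}. \<bar>\<xi> - b\<bar> \<le> \<bar>a - b\<bar> \<and> H a - H b = (a - b) * h \<xi>"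
proof (cases a b rule: linorder_cases)
  case less
  obtain z where "a < z" "z < b" "H b - H a = (b - a) * h z"
    using MVT2[OF less, of H h] deriv ab by auto
  then show ?thesis using ab by (intro bexI[of _ z]) (auto simp: algebra_simps)
next
  case greater
  obtain z where "b < z" "z < a" "H a - H b = (a - b) * h z"
    using MVT2[OF greater, of H h] deriv ab by auto
  then show ?thesis using ab by (intro bexI[of _ z]) auto
qed (use ab in auto)

lemma uniform_difference_quotient:
  fixes H h :: "real \<Rightarrow> real"
  assumes deriv: "\<And>y. y \<in> {-R<..<R} \<Longrightarrow> (H has_real_derivative h y) (at y)"
    and h: "continuous_on {-R..R} h" and e: "0 < e"
  obtains \<eta> where "0 < \<eta>" "\<And>y y'. y \<in> {-R<..<R} \<Longrightarrow> y' \<in> {-R<..<R} \<Longrightarrow> y' \<noteq> y \<Longrightarrow>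
      \<bar>y' - y\<bar> < \<eta> \<Longrightarrow> \<bar>(H y' - H y) / (y' - y) - h y\<bar> < e"
proof -
  obtain \<eta> where \<eta>: "\<eta> > 0" and close: "\<And>y y'. y \<in> {-R..R} \<Longrightarrow> y' \<in> {-R..R} \<Longrightarrow>
      dist y' y < \<eta> \<Longrightarrow> dist (h y') (h y) < e"
    using compact_uniformly_continuous[OF h compact_Icc] e unfolding uniformly_continuous_on_def by metis
  have "\<bar>(H y' - H y) / (y' - y) - h y\<bar> < e"
    if y: "y \<in> {-R<..<R}" "y' \<in> {-R<..<R}" "y' \<noteq> y" "\<bar>y' - y\<bar> < \<eta>" for y y'
  proof -
    obtain \<xi> where \<xi>: "\<xi> \<in> {-R<..<R}" "\<bar>\<xi> - y\<bar> \<le> \<bar>y' - y\<bar>" "H y' - H y = (y' - y) * h \<xi>"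
      using mvt_open_interval[where R = R and a = y' and b = y, OF deriv] y by auto
    then have "(H y' - H y) / (y' - y) = h \<xi>" using y(3) by simp
    moreover have "dist (h \<xi>) (h y) < e" using close[of y \<xi>] \<xi> y by (auto simp: dist_real_def)
    ultimately show ?thesis by (simp add: dist_real_def)
  qed
  with \<eta> show ?thesis using that by blast
qed

lemma has_real_derivative_integral_translate:
  fixes H h k :: "real \<Rightarrow> real"
  assumes deriv: "\<And>y. y \<in> {-R<..<R} \<Longrightarrow> (H has_real_derivative h y) (at y)"
    and h: "continuous_on {-R..R} h"
    and k: "k absolutely_integrable_on {a..b}"
    and translates: "\<And>x t. x \<in> {a..b} \<Longrightarrow> t \<in> T \<Longrightarrow> x - t \<in> {-R<..<R}"
    and t: "t \<in> T"
  shows "((\<lambda>t. integral {a..b} (\<lambda>x. H (x - t) * k x)) has_real_derivative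
            - integral {a..b} (\<lambda>x. h (x - t) * k x)) (at t within T)"
  unfolding has_field_derivative_iff Lim_within
proof (intro allI impI)
  fix \<epsilon> :: real assume \<epsilon>: "0 < \<epsilon>"
  define K where "K = integral {a..b} (\<lambda>x. \<bar>k x\<bar>)"
  have K: "0 \<le> K"
    unfolding K_def using k by (intro integral_nonneg) (auto simp: absolutely_integrable_on_def)
  have cont_H: "continuous_on {a..b} (\<lambda>x. H (x - t))" if "t \<in> T" for t
  proof (intro continuous_at_imp_continuous_on ballI)
    fix x assume "x \<in> {a..b}"
    then have "isCont H (x - t)" using deriv translates that DERIV_isCont by blast
    then show "isCont (\<lambda>x. H (x - t)) x"
      by (intro isCont_o2[where f = "\<lambda>x. x - t" and g = H] continuous_intros)
  qed
  have cont_h: "continuous_on {a..b} (\<lambda>x. h (x - t))" if "t \<in> T" for t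
  proof -
    have "(\<lambda>x. x - t) ` {a..b} \<subseteq> {-R..R}" using translates that by fastforce
    then show ?thesis by (intro continuous_on_compose2[OF h] continuous_intros)
  qed
  obtain \<eta> where \<eta>: "0 < \<eta>" and quotient: "\<And>y y'. y \<in> {-R<..<R} \<Longrightarrow> y' \<in> {-R<..<R} \<Longrightarrow> y' \<noteq> y
      \<Longrightarrow> \<bar>y' - y\<bar> < \<eta> \<Longrightarrow> \<bar>(H y' - H y) / (y' - y) - h y\<bar> < \<epsilon> / (K + 1)"
    using uniform_difference_quotient[OF deriv h, of "\<epsilon> / (K + 1)"] \<epsilon> K by auto
  show "\<exists>\<delta>>0. \<forall>t'\<in>T. 0 < dist t' t \<and> dist t' t < \<delta> \<longrightarrow>
      dist ((integral {a..b} (\<lambda>x. H (x - t') * k x) - integral {a..b} (\<lambda>x. H (x - t) * k x)) / (t' - t))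
        (- integral {a..b} (\<lambda>x. h (x - t) * k x)) < \<epsilon>"
  proof (intro exI[of _ \<eta>] conjI ballI impI \<eta>)
    fix t' assume t': "t' \<in> T" and dt: "0 < dist t' t \<and> dist t' t < \<eta>"
    define q where "q x = h (x - t) - 1 / (t - t') * (H (x - t') - H (x - t))" for x
    have q: "\<bar>q x\<bar> \<le> \<epsilon> / (K + 1)" if x: "x \<in> {a..b}" for x
      using quotient[of "x - t" "x - t'"] translates[OF x t] translates[OF x t'] dt
      by (fastforce simp: q_def dist_real_def abs_minus_commute)
    have cont_q: "continuous_on {a..b} q"
      unfolding q_def using dt by (intro continuous_intros cont_H cont_h t t') auto
    have i1: "(\<lambda>x. H (x - t') * k x) integrable_on {a..b}"
      and i2: "(\<lambda>x. H (x - t) * k x) integrable_on {a..b}"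
      and i3: "(\<lambda>x. h (x - t) * k x) integrable_on {a..b}"
      using integrable_continuous_mult[OF cont_H[OF t'] k] integrable_continuous_mult[OF cont_H[OF t] k]
        integrable_continuous_mult[OF cont_h[OF t] k] .
    have "integral {a..b} (\<lambda>x. q x * k x)
        = integral {a..b} (\<lambda>x. h (x - t) * k x - 1 / (t - t') * (H (x - t') * k x - H (x - t) * k x))"
      by (rule integral_cong) (simp add: q_def algebra_simps)
    also have "\<dots> = integral {a..b} (\<lambda>x. h (x - t) * k x)
        - integral {a..b} (\<lambda>x. 1 / (t - t') * (H (x - t') * k x - H (x - t) * k x))"
      by (rule integral_diff[OF i3 integrable_on_mult_right[OF integrable_diff[OF i1 i2]]])
    also have "\<dots> = integral {a..b} (\<lambda>x. h (x - t) * k x) - 1 / (t - t') *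
        (integral {a..b} (\<lambda>x. H (x - t') * k x) - integral {a..b} (\<lambda>x. H (x - t) * k x))"
      using integral_diff[OF i1 i2] by simp
    finally have "(integral {a..b} (\<lambda>x. H (x - t') * k x) - integral {a..b} (\<lambda>x. H (x - t) * k x)) / (t' - t)
        + integral {a..b} (\<lambda>x. h (x - t) * k x) = integral {a..b} (\<lambda>x. q x * k x)"
      using dt by (simp add: field_simps)
    moreover have "\<bar>integral {a..b} (\<lambda>x. q x * k x)\<bar> \<le> \<epsilon> / (K + 1) * K"
      using abs_integral_continuous_mult_le[OF cont_q k q] by (simp only: K_def)
    moreover have "\<epsilon> / (K + 1) * K < \<epsilon>"
      using \<epsilon> K by (simp add: field_simps)
    ultimately show "dist ((integral {a..b} (\<lambda>x. H (x - t') * k x) - integral {a..b} (\<lambda>x. H (x - t) * k x)) / (t' - t))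
        (- integral {a..b} (\<lambda>x. h (x - t) * k x)) < \<epsilon>"
      by (simp add: dist_real_def)
  qed
qed

lemma has_real_derivative_integral_tail:
  fixes k :: "real \<Rightarrow> real"
  assumes k: "k integrable_on {a..b}" and E: "finite E"
    and x: "x \<in> {a<..<b} - E" and cont: "isCont k x"
  shows "((\<lambda>y. integral {y..b} k) has_real_derivative - k x) (at x)"
proof -
  have "open ({a<..<b} - E)" using E by (intro open_Diff finite_imp_closed) auto
  then have "{a<..<b} - E \<subseteq> interior ({a..b} - E)" by (intro interior_maximal) auto
  then have "x \<in> interior ({a..b} - E)" using x by blast
  moreover have "((\<lambda>y. integral {a..y} k) has_vector_derivative k x) (at x within ({a..b} - E))"
  proof (rule integral_has_vector_derivative_continuous_at[OF k _ E])
    show "x \<in> {a..b} - E" using x by auto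
    show "continuous (at x within {a..b} - E) k"
      using cont by (rule continuous_at_imp_continuous_at_within)
  qed
  ultimately have "((\<lambda>y. integral {a..y} k) has_vector_derivative k x) (at x)"
    using at_within_interior by metis
  then have "((\<lambda>y. integral {a..b} k - integral {a..y} k) has_vector_derivative 0 - k x) (at x)"
    by (intro has_vector_derivative_diff has_vector_derivative_const)
  then have "((\<lambda>y. integral {a..b} k - integral {a..y} k) has_real_derivative - k x) (at x)"
    by (simp add: has_real_derivative_iff_has_vector_derivative)
  then show ?thesis
  proof (rule has_field_derivative_transform_within_open[OF _ open_greaterThanLessThan])
    show "x \<in> {a<..<b}" using x by simp
    show "integral {a..b} k - integral {a..y} k = integral {y..b} k" if "y \<in> {a<..<b}" for y
      using that Henstock_Kurzweil_Integration.integral_combine[OF _ _ k, of y] by simp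
  qed
qed

lemma causal_primitive_has_real_derivative:
  assumes \<phi>: "causal \<phi>" and y: "y \<in> {-R<..<R}"
  shows "((\<lambda>y. integral {-R..y} \<phi>) has_real_derivative \<phi> y) (at y)"
  using integral_has_real_derivative[where a = "-R" and b = R and t = y, OF causal_continuous_on[OF \<phi>]] y
    at_within_Icc_at[of "-R" y R] by simp

lemma causal_primitive_zero:
  assumes \<phi>: "causal \<phi>" and y: "y \<le> 0"
  shows "integral {-R..y} \<phi> = 0"
proof -
  have "integral {-R..y} \<phi> = integral {-R..y} (\<lambda>_. 0)"
    by (rule integral_cong) (use y causal_zero[OF \<phi>] in auto)
  then show ?thesis by simp
qed

lemma translates_orthogonal_imp_primitive_orthogonal:
  fixes k :: "real \<Rightarrow> real"
  assumes \<phi>: "causal \<phi>" and k: "k absolutely_integrable_on {0..1}"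
    and orth: "\<And>t. t \<in> {0..1} \<Longrightarrow> integral {0..1} (\<lambda>x. \<phi> (x - t) * k x) = 0"
    and t: "t \<in> {0..1}"
  shows "integral {0..1} (\<lambda>x. integral {-2..x - t} \<phi> * k x) = 0"
proof -
  define \<Psi> where "\<Psi> t = integral {0..1} (\<lambda>x. integral {-2..x - t} \<phi> * k x)" for t
  have "(\<Psi> has_real_derivative 0) (at t within {0..1})" if t: "t \<in> {0..1}" for t
  proof -
    have "(\<Psi> has_real_derivative - integral {0..1} (\<lambda>x. \<phi> (x - t) * k x)) (at t within {0..1})"
      unfolding \<Psi>_def
      by (rule has_real_derivative_integral_translate[where R = 2,
            OF causal_primitive_has_real_derivative[OF \<phi>] causal_continuous_on[OF \<phi>] k _ t]) auto
    then show ?thesis using orth[OF t] by simp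
  qed
  then obtain c where c: "\<And>t. t \<in> {0..1} \<Longrightarrow> \<Psi> t = c"
    using has_field_derivative_zero_constant[of "{0..1}" \<Psi>] by auto
  have "\<Psi> 1 = 0"
  proof -
    have "integral {0..1} (\<lambda>x. integral {-2..x - 1} \<phi> * k x) = integral {0..1::real} (\<lambda>_. 0)"
      by (intro integral_cong) (simp add: causal_primitive_zero[OF \<phi>])
    then show ?thesis by (simp add: \<Psi>_def)
  qed
  then have "\<Psi> t = 0" using c[OF t] c[of 1] by simp
  then show ?thesis by (simp add: \<Psi>_def)
qed

lemma translates_orthogonal_imp_tail_orthogonal:
  fixes k :: "real \<Rightarrow> real"
  assumes \<phi>: "causal \<phi>" and k: "k absolutely_integrable_on {0..1}" and E: "finite E"
    and k_cont: "\<And>x. x \<in> {0<..<1} - E \<Longrightarrow> isCont k x"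
    and orth: "\<And>t. t \<in> {0..1} \<Longrightarrow> integral {0..1} (\<lambda>x. \<phi> (x - t) * k x) = 0"
    and t: "t \<in> {0..1}"
  shows "integral {0..1} (\<lambda>x. \<phi> (x - t) * integral {x..1} k) = 0"
proof -
  have k_int: "k integrable_on {0..1}" using k by (simp add: absolutely_integrable_on_def)
  define H where "H y = integral {-2..y} \<phi>" for y
  have H_cont: "continuous_on {0..1} (\<lambda>x. H (x - t))"
  proof -
    have "continuous_on {-2..2} H"
      unfolding H_def by (intro indefinite_integral_continuous_1 integrable_continuous_real causal_continuous_on[OF \<phi>])
    moreover have "continuous_on {0..1} (\<lambda>x. x - t)" by (intro continuous_intros)
    moreover have "(\<lambda>x. x - t) ` {0..1} \<subseteq> {-2..2}" using t by auto
    ultimately show ?thesis by (rule continuous_on_compose2)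
  qed
  have "((\<lambda>x. \<phi> (x - t) * integral {x..1} k) has_integral 0) {0..1}"
  proof (rule integration_by_parts_interior_strong[OF bounded_bilinear_mult E, of 0 1 "\<lambda>x. H (x - t)"
        "\<lambda>x. integral {x..1} k" "\<lambda>x. \<phi> (x - t)" "\<lambda>x. - k x"])
    show "continuous_on {0..1} (\<lambda>x. H (x - t))" by (rule H_cont)
    show "continuous_on {0..1} (\<lambda>x. integral {x..1} k)"
      by (rule indefinite_integral_continuous_1'[OF k_int])
    show "((\<lambda>x. H (x - t)) has_vector_derivative \<phi> (x - t)) (at x)" if "x \<in> {0<..<1} - E" for x
    proof -
      have "(H has_real_derivative \<phi> (x - t)) (at (x - t))"
        unfolding H_def using that t by (intro causal_primitive_has_real_derivative[OF \<phi>]) auto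
      then have "((\<lambda>x. H (x - t)) has_real_derivative \<phi> (x - t) * 1) (at x)"
        by (rule DERIV_chain2) (auto intro!: derivative_eq_intros)
      then show ?thesis by (simp add: has_real_derivative_iff_has_vector_derivative)
    qed
    show "((\<lambda>y. integral {y..1} k) has_vector_derivative - k x) (at x)" if "x \<in> {0<..<1} - E" for x
      using has_real_derivative_integral_tail[OF k_int E that k_cont[OF that]]
      by (simp add: has_real_derivative_iff_has_vector_derivative)
    have "((\<lambda>x. H (x - t) * k x) has_integral 0) {0..1}"
      using integrable_integral[OF integrable_continuous_mult[OF H_cont k]]
        translates_orthogonal_imp_primitive_orthogonal[OF \<phi> k orth t] by (simp add: H_def)
    then have "((\<lambda>x. - (H (x - t) * k x)) has_integral - 0) {0..1}"
      by (rule has_integral_neg)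
    moreover have "H (0 - t) = 0"
      unfolding H_def using t by (intro causal_primitive_zero[OF \<phi>]) simp
    ultimately show "((\<lambda>x. H (x - t) * - k x) has_integral
        H (1 - t) * integral {1..1} k - H (0 - t) * integral {0..1} k - 0) {0..1}"
      by simp
  qed simp
  then show ?thesis by (simp add: integral_unique)
qed

lemma tail_orthogonal_imp_conv_zero:
  fixes k :: "real \<Rightarrow> real"
  assumes \<phi>: "causal \<phi>" and k: "k integrable_on {0..1}"
    and tail: "\<And>t. t \<in> {0..1} \<Longrightarrow> integral {0..1} (\<lambda>x. \<phi> (x - t) * integral {x..1} k) = 0"
    and u: "u \<le> 1"
  shows "conv \<phi> (\<lambda>v. integral {1 - max 0 (min v 1)..1} k) u = 0"
proof (cases "u < 0")
  case True
  then show ?thesis using conv_nonpos[OF \<phi>] by simp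
next
  case False
  define \<kappa> where "\<kappa> y = integral {y..1} k" for y
  define t where "t = 1 - u"
  have t: "t \<in> {0..1}" using u False by (simp add: t_def)
  have \<kappa>_cont: "continuous_on {0..1} \<kappa>"
    unfolding \<kappa>_def by (rule indefinite_integral_continuous_1'[OF k])
  have "(\<lambda>w. w + t) ` {-t..u} \<subseteq> {0..1}" by (auto simp: t_def)
  then have "continuous_on {-t..u} (\<lambda>w. \<kappa> (w + t))"
    by (rule continuous_on_compose2[OF \<kappa>_cont, rotated]) (intro continuous_intros)
  then have cont: "continuous_on {-t..u} (\<lambda>w. \<phi> w * \<kappa> (w + t))"
    by (intro continuous_intros causal_continuous_on[OF \<phi>])
  have "0 = integral {0..1} (\<lambda>x. \<phi> (x - t) * \<kappa> x)"
    using tail[OF t] by (simp add: \<kappa>_def)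
  also have "\<dots> = integral {-t..u} (\<lambda>w. \<phi> w * \<kappa> (w + t))"
    using integral_shift_ivl[of 0 1 "\<lambda>x. \<phi> (x - t) * \<kappa> x" t] by (simp add: t_def)
  also have "\<dots> = integral {0..u} (\<lambda>w. \<phi> w * \<kappa> (w + t))"
    by (rule integral_zero_left[OF _ _ integrable_continuous_real[OF cont]])
       (use False t in \<open>auto simp: causal_zero[OF \<phi>]\<close>)
  also have "\<dots> = conv \<phi> (\<lambda>v. integral {1 - max 0 (min v 1)..1} k) u"
    unfolding conv_def
  proof (rule integral_cong)
    fix w assume "w \<in> {0..u}"
    then have "1 - max 0 (min (u - w) 1) = w + t" using u by (auto simp: t_def)
    then show "\<phi> w * \<kappa> (w + t) = \<phi> w * integral {1 - max 0 (min (u - w) 1)..1} k"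
      by (simp add: \<kappa>_def)
  qed
  finally show ?thesis by simp
qed

text \<open>The primitive \<open>\<kappa> y = \<integral>\<^sub>y\<^sup>1 k\<close>, reflected at \<open>1\<close>, has vanishing convolution with \<open>\<phi>\<close>;
  Titchmarsh's theorem forces \<open>\<kappa> = 0\<close>, and differentiating gives \<open>k = 0\<close>.\<close>

lemma translates_orthogonal_imp_zero:
  fixes k :: "real \<Rightarrow> real"
  assumes \<phi>: "causal \<phi>" and \<phi>_nonzero: "\<And>e. 0 < e \<Longrightarrow> \<exists>s. 0 < s \<and> s < e \<and> \<phi> s \<noteq> 0"
    and k: "k absolutely_integrable_on {0..1}" and E: "finite E"
    and k_cont: "\<And>x. x \<in> {0<..<1} - E \<Longrightarrow> isCont k x"
    and orth: "\<And>t. t \<in> {0..1} \<Longrightarrow> integral {0..1} (\<lambda>x. \<phi> (x - t) * k x) = 0"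
    and x: "x \<in> {0<..<1} - E"
  shows "k x = 0"
proof -
  have k_int: "k integrable_on {0..1}" using k by (simp add: absolutely_integrable_on_def)
  define \<gamma> where "\<gamma> v = integral {1 - max 0 (min v 1)..1} k" for v
  have "continuous_on UNIV \<gamma>"
    unfolding \<gamma>_def
    by (rule continuous_on_compose2[OF indefinite_integral_continuous_1'[OF k_int]])
       (auto intro!: continuous_intros)
  then have \<gamma>: "causal \<gamma>" by (simp add: causal_def \<gamma>_def)
  have "conv \<phi> \<gamma> u = 0" if "u \<le> 1" for u
    unfolding \<gamma>_def[abs_def]
    by (rule tail_orthogonal_imp_conv_zero[OF \<phi> k_int
          translates_orthogonal_imp_tail_orthogonal[OF \<phi> k E k_cont orth] that])
  then have "\<gamma> (1 - y) = 0" if "y \<in> {0..1}" for y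
    using titchmarsh_convolution[OF \<phi> \<gamma> _ _ \<phi>_nonzero, of 1 "1 - y"] that by simp
  moreover have "1 - max 0 (min (1 - y) 1) = y" if "y \<in> {0..1}" for y :: real
    using that by auto
  ultimately have \<kappa>_zero: "integral {y..1} k = 0" if "y \<in> {0..1}" for y
    using that by (simp add: \<gamma>_def)
  have "((\<lambda>y. integral {y..1} k) has_real_derivative - k x) (at x)"
    by (rule has_real_derivative_integral_tail[OF k_int E x k_cont[OF x]])
  moreover have "((\<lambda>y. integral {y..1} k) has_real_derivative 0) (at x)"
  proof (rule has_field_derivative_transform_within_open[OF DERIV_const open_greaterThanLessThan])
    show "x \<in> {0<..<1}" using x by simp
    show "\<And>y. y \<in> {0<..<1} \<Longrightarrow> 0 = integral {y..1} k" using \<kappa>_zero by simp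
  qed
  ultimately show ?thesis using DERIV_unique by fastforce
qed

section \<open>Regularity of the data\<close>

lemma holder_continuous_on_imp_continuous_on:
  assumes holder: "holder_continuous_on \<alpha> S f" and \<alpha>: "0 < \<alpha>"
  shows "continuous_on S f"
  unfolding continuous_on_iff
proof (intro ballI allI impI)
  fix x e assume x: "x \<in> S" and e: "(0::real) < e"
  obtain C where C: "\<forall>x\<in>S. \<forall>y\<in>S. \<bar>f x - f y\<bar> \<le> C * \<bar>x - y\<bar> powr \<alpha>"
    using holder by (auto simp: holder_continuous_on_def)
  define d where "d = (e / (\<bar>C\<bar> + 1)) powr (1/\<alpha>)"
  have "dist (f x') (f x) < e" if x': "x' \<in> S" "dist x' x < d" for x'
  proof -
    have "\<bar>x' - x\<bar> powr \<alpha> < d powr \<alpha>"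
      using x' \<alpha> by (intro powr_less_mono2) (auto simp: dist_real_def)
    also have "d powr \<alpha> = e / (\<bar>C\<bar> + 1)" using e \<alpha> by (simp add: d_def powr_powr)
    finally have lt: "\<bar>x' - x\<bar> powr \<alpha> < e / (\<bar>C\<bar> + 1)" .
    have "\<bar>f x' - f x\<bar> \<le> C * \<bar>x' - x\<bar> powr \<alpha>" using C x x' by auto
    also have "\<dots> \<le> \<bar>C\<bar> * \<bar>x' - x\<bar> powr \<alpha>" by (intro mult_right_mono) auto
    also have "\<dots> \<le> \<bar>C\<bar> * (e / (\<bar>C\<bar> + 1))" using lt by (intro mult_left_mono) auto
    also have "\<dots> = e * (\<bar>C\<bar> / (\<bar>C\<bar> + 1))" by simp
    also have "\<dots> < e * 1" using e by (intro mult_strict_left_mono) auto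
    finally show ?thesis by (simp add: dist_real_def)
  qed
  moreover have "0 < d" using e by (simp add: d_def)
  ultimately show "\<exists>d>0. \<forall>x'\<in>S. dist x' x < d \<longrightarrow> dist (f x') (f x) < e" by blast
qed

lemma riemann_integrable_on_imp_integrable_on:
  assumes "riemann_integrable_on g a b"
  shows "g integrable_on {a..b}"
proof -
  obtain I where I: "\<forall>e>0. \<exists>\<delta>>0. \<forall>p. p tagged_division_of {a..b} \<and> (\<lambda>x. ball x \<delta>) fine p \<longrightarrow>
      \<bar>(\<Sum>(x,K)\<in>p. Henstock_Kurzweil_Integration.content K * g x) - I\<bar> < e"
    using assms by (auto simp: riemann_integrable_on_def)
  have "(g has_integral I) (cbox a b)"
    unfolding has_integral
  proof (intro allI impI)
    fix e :: real assume "0 < e"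
    then obtain \<delta> where "\<delta> > 0" and \<delta>: "\<forall>p. p tagged_division_of {a..b} \<and> (\<lambda>x. ball x \<delta>) fine p \<longrightarrow>
        \<bar>(\<Sum>(x,K)\<in>p. Henstock_Kurzweil_Integration.content K * g x) - I\<bar> < e"
      using I by blast
    then show "\<exists>\<gamma>. gauge \<gamma> \<and> (\<forall>\<D>. \<D> tagged_division_of cbox a b \<and> \<gamma> fine \<D> \<longrightarrow>
        norm ((\<Sum>(x, k)\<in>\<D>. Henstock_Kurzweil_Integration.content k *\<^sub>R g x) - I) < e)"
      by (intro exI[of _ "\<lambda>x. ball x \<delta>"]) (simp add: box_real gauge_ball)
  qed
  then show ?thesis by (auto simp: box_real integrable_on_def)
qed

lemma bounded_integrable_imp_absolutely_integrable:
  fixes g :: "real \<Rightarrow> real"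
  assumes "g integrable_on {a..b}" "bounded (g ` {a..b})"
  shows "g absolutely_integrable_on {a..b}"
proof -
  obtain B where "\<forall>y\<in>g ` {a..b}. norm y \<le> B"
    using assms(2) bounded_iff by blast
  then show ?thesis
    by (intro measurable_bounded_by_integrable_imp_absolutely_integrable[where g = "\<lambda>_. B"]
        integrable_imp_measurable[OF assms(1)]) auto
qed

lemma continuous_on_eq_const_off_finite:
  fixes f :: "real \<Rightarrow> real"
  assumes I: "is_interval I" "a \<in> I" "b \<in> I" "a < b" and f: "continuous_on I f"
    and E: "finite E" and eq: "\<And>y. y \<in> I - E \<Longrightarrow> f y = c" and x: "x \<in> I"
  shows "f x = c"
proof -
  obtain p q where pq: "p < q" "x \<in> {p..q}" "p \<in> I" "q \<in> I"
  proof (cases "x < b")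
    case True
    then show ?thesis using I x by (intro that[of x b]) auto
  next
    case False
    then show ?thesis using I x by (intro that[of a x]) auto
  qed
  have sub: "{p..q} \<subseteq> I"
  proof
    fix y assume "y \<in> {p..q}"
    then have "p \<le> y" "y \<le> q" by auto
    then show "y \<in> I" using I(1) pq(3,4) unfolding is_interval_1 by blast
  qed
  have "x islimpt {p..q}" using pq by simp
  then have "x islimpt E \<union> ({p..q} - E)" by (rule islimpt_subset) auto
  then have "x islimpt {p..q} - E" using islimpt_Un_finite[OF E] by blast
  then have "x \<in> closure ({p..q} - E)" by (simp add: closure_def)
  moreover have "closure ({p..q} - E) \<subseteq> {p..q}" by (intro closure_minimal) auto
  then have "continuous_on (closure ({p..q} - E)) f" using sub by (intro continuous_on_subset[OF f]) auto
  moreover have "f y = c" if "y \<in> {p..q} - E" for y using that sub by (intro eq) auto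
  ultimately show ?thesis by (rule continuous_constant_on_closure[rotated 2])
qed

lemma piecewise_continuous_on_isCont:
  assumes "piecewise_continuous_on g a b"
  obtains E where "finite E" "\<And>x. x \<in> {a..b} - E \<Longrightarrow> isCont g x"
proof -
  obtain \<I> where fin: "finite \<I>" and cover: "\<Union>\<I> = {a..b}"
    and pieces: "\<And>I. I \<in> \<I> \<Longrightarrow> is_interval I \<and> (\<exists>x\<in>I. \<exists>y\<in>I. x < y) \<and> continuous_on I g"
    using assms by (auto simp: piecewise_continuous_on_def)
  define E where "E = (\<Union>I\<in>\<I>. {Inf I, Sup I})"
  have "isCont g x" if x: "x \<in> {a..b} - E" for x
  proof -
    obtain I where I: "I \<in> \<I>" "x \<in> I" using x cover by blast
    have bdd: "bdd_below I" "bdd_above I"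
      using I cover by (auto intro!: bdd_belowI[of _ a] bdd_aboveI[of _ b])
    have "x \<in> {Inf I<..<Sup I}"
      using x I cInf_lower[OF I(2) bdd(1)] cSup_upper[OF I(2) bdd(2)] by (auto simp: E_def)
    moreover have "{Inf I<..<Sup I} \<subseteq> I"
    proof
      fix y assume y: "y \<in> {Inf I<..<Sup I}"
      obtain u v where "u \<in> I" "u < y" "v \<in> I" "y < v"
        using y cInf_less_iff[of I y] less_cSup_iff[of I y] I bdd by auto
      then show "y \<in> I" using pieces[OF I(1)] unfolding is_interval_1 by (meson less_imp_le)
    qed
    ultimately have "x \<in> interior I" using interior_maximal[OF _ open_greaterThanLessThan] by blast
    then show ?thesis using continuous_on_interior pieces[OF I(1)] by blast
  qed
  moreover have "finite E" using fin by (simp add: E_def)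
  ultimately show ?thesis using that by blast
qed

lemma piecewise_continuous_on_eq_const:
  assumes "piecewise_continuous_on g a b" "finite E"
    and eq: "\<And>x. x \<in> {a<..<b} - E \<Longrightarrow> g x = c" and x: "x \<in> {a..b}"
  shows "g x = c"
proof -
  obtain \<I> where cover: "\<Union>\<I> = {a..b}"
    and pieces: "\<And>I. I \<in> \<I> \<Longrightarrow> is_interval I \<and> (\<exists>x\<in>I. \<exists>y\<in>I. x < y) \<and> continuous_on I g"
    using assms(1) by (auto simp: piecewise_continuous_on_def)
  obtain I where I: "I \<in> \<I>" "x \<in> I" using x cover by blast
  obtain u v where uv: "u \<in> I" "v \<in> I" "u < v" using pieces[OF I(1)] by auto
  show ?thesis
  proof (rule continuous_on_eq_const_off_finite[of I u v g "E \<union> {a, b}"])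
    show "is_interval I" "continuous_on I g" using pieces[OF I(1)] by auto
    show "finite (E \<union> {a, b})" using assms(2) by simp
    have "I \<subseteq> {a..b}" using I cover by blast
    then show "g y = c" if "y \<in> I - (E \<union> {a, b})" for y
      using that by (intro eq) auto
  qed (use uv I in auto)
qed

lemma causal_extension:
  fixes h :: "real \<Rightarrow> real"
  assumes cont: "continuous_on {0..1} h" and neg: "\<forall>x\<in>{-1..0}. h x = 0"
  obtains \<phi> where "causal \<phi>" "\<And>y. y \<in> {-1..1} \<Longrightarrow> \<phi> y = h y"
proof
  have "continuous_on UNIV (\<lambda>x. h (max 0 (min x 1)))"
    by (rule continuous_on_compose2[OF cont]) (auto intro!: continuous_intros)
  then show "causal (\<lambda>x. h (max 0 (min x 1)))" using neg by (simp add: causal_def)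
  show "h (max 0 (min y 1)) = h y" if "y \<in> {-1..1}" for y
    using neg that by (cases "y \<le> 0") auto
qed

lemma nonzero_near_Inf_support:
  fixes h :: "real \<Rightarrow> real"
  assumes inf: "Inf {x\<in>{-1..1}. h x \<noteq> 0} = 0" and nonconst: "\<exists>x\<in>{-1..1}. \<exists>y\<in>{-1..1}. h x \<noteq> h y"
    and neg: "\<forall>x\<in>{-1..0}. h x = 0" and e: "0 < e"
  shows "\<exists>s\<in>{0<..1}. s < e \<and> h s \<noteq> 0"
proof -
  define S where "S = {x\<in>{-1..1}. h x \<noteq> 0}"
  have "S \<noteq> {}"
  proof -
    obtain x y where "x \<in> {-1..1}" "y \<in> {-1..1}" "h x \<noteq> h y" using nonconst by blast
    then show ?thesis by (cases "h x = 0") (auto simp: S_def)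
  qed
  moreover have "bdd_below S" by (auto simp: S_def intro: bdd_belowI[of _ "-1"])
  moreover have "Inf S < e" using inf e by (simp add: S_def)
  ultimately obtain s where "s \<in> S" "s < e" using cInf_less_iff by blast
  moreover have "0 < s" using neg \<open>s \<in> S\<close> by (force simp: S_def)
  ultimately show ?thesis by (auto simp: S_def)
qed

lemma integral_mult_sub_mean:
  fixes \<phi> g :: "real \<Rightarrow> real"
  assumes \<phi>: "continuous_on {a..b} \<phi>" and g: "g absolutely_integrable_on {a..b}"
  shows "integral {a..b} (\<lambda>x. \<phi> x * g x) - integral {a..b} g * integral {a..b} \<phi>
       = integral {a..b} (\<lambda>x. \<phi> x * (g x - integral {a..b} g))"
proof -
  have "(\<lambda>x. \<phi> x * integral {a..b} g) integrable_on {a..b}"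
    using \<phi> by (intro integrable_continuous_real continuous_intros)
  then show ?thesis
    using integral_diff[OF integrable_continuous_mult[OF \<phi> g]]
    by (simp add: right_diff_distrib mult.commute)
qed

lemma translates_not_orthogonal:
  fixes g :: "real \<Rightarrow> real"
  assumes \<phi>: "causal \<phi>" and \<phi>_nonzero: "\<And>e. 0 < e \<Longrightarrow> \<exists>s. 0 < s \<and> s < e \<and> \<phi> s \<noteq> 0"
    and g: "g absolutely_integrable_on {0..1}" and pc: "piecewise_continuous_on g 0 1"
    and nonconst: "\<exists>x\<in>{0..1}. \<exists>y\<in>{0..1}. g x \<noteq> g y"
  shows "\<exists>t\<in>{0..1}. integral {0..1} (\<lambda>x. \<phi> (x - t) * (g x - integral {0..1} g)) \<noteq> 0"
proof (rule ccontr)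
  define k where "k x = g x - integral {0..1} g" for x
  assume "\<not> ?thesis"
  then have orth: "integral {0..1} (\<lambda>x. \<phi> (x - t) * k x) = 0" if "t \<in> {0..1}" for t
    using that by (simp add: k_def)
  have k: "k absolutely_integrable_on {0..1}"
    unfolding k_def using g by (intro set_integral_diff(1) absolutely_integrable_on_const) auto
  obtain E where E: "finite E" and g_cont: "\<And>x. x \<in> {0..1} - E \<Longrightarrow> isCont g x"
    using piecewise_continuous_on_isCont[OF pc] by blast
  have "isCont k x" if "x \<in> {0<..<1} - E" for x
    unfolding k_def[abs_def] using g_cont[of x] that by (intro continuous_intros) auto
  then have "k x = 0" if "x \<in> {0<..<1} - E" for x
    using translates_orthogonal_imp_zero[OF \<phi> \<phi>_nonzero k E _ orth that] by blast
  then have "g x = integral {0..1} g" if "x \<in> {0..1}" for x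
    using piecewise_continuous_on_eq_const[OF pc E _ that] by (simp add: k_def)
  then show False using nonconst by force
qed

lemma bdd_above_abs_integral_translates:
  fixes k :: "real \<Rightarrow> real"
  assumes \<phi>: "causal \<phi>" and k: "k absolutely_integrable_on {0..1}"
  shows "bdd_above ((\<lambda>t. \<bar>integral {0..1} (\<lambda>x. \<phi> (x - t) * k x)\<bar>) ` {0..1})"
proof -
  obtain B where B: "\<forall>y\<in>\<phi> ` {-1..1}. norm y \<le> B"
    using compact_imp_bounded[OF compact_continuous_image[OF causal_continuous_on[OF \<phi>] compact_Icc]]
      bounded_iff by blast
  have "\<bar>integral {0..1} (\<lambda>x. \<phi> (x - t) * k x)\<bar> \<le> B * integral {0..1} (\<lambda>x. \<bar>k x\<bar>)"
    if "t \<in> {0..1}" for t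
    using B that
    by (intro abs_integral_continuous_mult_le[OF _ k] continuous_on_causal[OF \<phi>] continuous_intros) auto
  then show ?thesis by (rule bdd_aboveI2)
qed

lemma integral_translate_sub_mean:
  fixes \<phi> g h :: "real \<Rightarrow> real"
  assumes \<phi>: "causal \<phi>" and \<phi>_h: "\<And>y. y \<in> {-1..1} \<Longrightarrow> \<phi> y = h y"
    and g: "g absolutely_integrable_on {0..1}" and t: "t \<in> {0..1}"
  shows "integral {0..1} (\<lambda>x. h (x - t) * g x) - integral {0..1} g * integral {0..1} (\<lambda>x. h (x - t))
       = integral {0..1} (\<lambda>x. \<phi> (x - t) * (g x - integral {0..1} g))"
proof -
  have "integral {0..1} (\<lambda>x. h (x - t) * g x) = integral {0..1} (\<lambda>x. \<phi> (x - t) * g x)"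
    "integral {0..1} (\<lambda>x. h (x - t)) = integral {0..1} (\<lambda>x. \<phi> (x - t))"
    using t by (auto intro!: integral_cong simp: \<phi>_h)
  moreover have "continuous_on {0..1} (\<lambda>x. \<phi> (x - t))"
    by (intro continuous_on_causal[OF \<phi>] continuous_intros)
  ultimately show ?thesis using integral_mult_sub_mean[OF _ g] by simp
qed

theorem proposition3p1:
  fixes g h :: "real \<Rightarrow> real" and \<alpha> :: real
  assumes g_nonconst: "\<exists>x\<in>{0..1}. \<exists>y\<in>{0..1}. g x \<noteq> g y"
    and g_bounded: "bounded (g ` {0..1})"
    and g_riemann: "riemann_integrable_on g 0 1"
    and g_pc: "piecewise_continuous_on g 0 1"
    and g0: "g 0 = 0"
    and h_nonconst: "\<exists>x\<in>{-1..1}. \<exists>y\<in>{-1..1}. h x \<noteq> h y"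
    and h_neg: "\<forall>x\<in>{-1..0}. h x = 0"
    and h_bv: "bounded_variation_on h (-1) 1"
    and alpha_pos: "\<alpha> > 0"
    and h_holder: "holder_continuous_on \<alpha> {0..1} h"
    and h_inf: "Inf {x\<in>{-1..1}. h x \<noteq> 0} = 0"
  shows "(SUP t\<in>{0..1}. \<bar>integral {0..1} (\<lambda>x. h (x - t) * g x)
            - integral {0..1} g * integral {0..1} (\<lambda>x. h (x - t))\<bar>) > 0"
proof -
  obtain \<phi> where \<phi>: "causal \<phi>" and \<phi>_h: "\<And>y. y \<in> {-1..1} \<Longrightarrow> \<phi> y = h y"
    using causal_extension[OF holder_continuous_on_imp_continuous_on[OF h_holder alpha_pos] h_neg]
    by blast
  have \<phi>_nonzero: "\<exists>s. 0 < s \<and> s < e \<and> \<phi> s \<noteq> 0" if "0 < e" for e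
    using nonzero_near_Inf_support[OF h_inf h_nonconst h_neg that] \<phi>_h by force
  have g: "g absolutely_integrable_on {0..1}"
    by (rule bounded_integrable_imp_absolutely_integrable[OF
          riemann_integrable_on_imp_integrable_on[OF g_riemann] g_bounded])
  define k where "k x = g x - integral {0..1} g" for x
  have k: "k absolutely_integrable_on {0..1}"
    unfolding k_def using g by (intro set_integral_diff(1) absolutely_integrable_on_const) auto
  obtain t where t: "t \<in> {0..1}" "integral {0..1} (\<lambda>x. \<phi> (x - t) * k x) \<noteq> 0"
    using translates_not_orthogonal[OF \<phi> \<phi>_nonzero g g_pc g_nonconst] by (auto simp: k_def)
  then have "0 < \<bar>integral {0..1} (\<lambda>x. \<phi> (x - t) * k x)\<bar>" by simp
  also have "\<dots> \<le> (SUP s\<in>{0..1}. \<bar>integral {0..1} (\<lambda>x. \<phi> (x - s) * k x)\<bar>)"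
    by (rule cSUP_upper[OF t(1) bdd_above_abs_integral_translates[OF \<phi> k]])
  also have "\<dots> = (SUP s\<in>{0..1}. \<bar>integral {0..1} (\<lambda>x. h (x - s) * g x)
            - integral {0..1} g * integral {0..1} (\<lambda>x. h (x - s))\<bar>)"
    unfolding k_def using integral_translate_sub_mean[OF \<phi> \<phi>_h g] by (intro SUP_cong) auto
  finally show ?thesis .
qed

end
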